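(* Let $f$ be a maximal coupling function for the kernel $p$ on the alphabet $G$, assume $a_1>0$ and $a_k\uparrow1$, let $\mathbf{U}=\{U_i\}_{i\in\mathbf{Z}}$ be i.i.d. uniform on $[0,1)$, and define $$\tau_0=\sup\Big\{m<0:\exists\, l\in[m,0]\ \text{such that}\ \big(U_l/a_1,\dots,U_m/a_1\big)\in E_{l-m+1}\ \text{and, if } l<0,\ K(U_j)\le j-l\ \text{for all } j\in[l+1,0]\Big\}.$$ Suppose (i) $\sum_{n=1}^\infty\prod_{m=1}^n a_m=\infty$; (ii) there exists $s\in\mathbf{N}^*$ such that $P\big((U_{s-1},\dots,U_0)\in E_s\big)>0$. Then $\tau_0$ is finite almost surely.
   Context: $G$ finite or countable; histories $\mathbf{w}=(w_{-1},w_{-2},\dots)\in G^{-\mathbf{N}^*}$; kernel $p(g|\mathbf{w})$ measurable in $\mathbf{w}$, summing to 1 over $g$. Admissible histories $\mathcal{H}$: a letter $g$ is forbidden if $p(g|\mathbf{w})=0$ for all $\mathbf{w}$; a word $(s_0,\dots,s_{-n})$ is forbidden if $(s_{-1},\dots,s_{-n})$ is forbidden or $p(s_0|\mathbf{w})=0$ for all histories beginning with $(s_{-1},\dots,s_{-n})$; $\mathbf{w}\in\mathcal{H}$ iff no initial word is forbidden. $a_0(g)=\inf\{p(g|\mathbf{z}):\mathbf{z}\in\mathcal{H}\}$; for $k\ge1$, $a_k(g|w_{-1},\dots,w_{-k})=\inf\{p(g|\mathbf{z}):\mathbf{z}\in\mathcal{H},(z_{-1},\dots,z_{-k})=(w_{-1},\dots,w_{-k})\}$;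 $b_k=a_k-a_{k-1}$ ($a_{-1}\equiv0$); $a_k(w_{-1},\dots,w_{-k})=\sum_ga_k(g|\cdot)$; $a_0=\sum_ga_0(g)$; $a_k=\inf_{\mathbf{w}\in\mathcal{H}}a_k(w_{-1},\dots,w_{-k})$. Maximal coupling function $f:[0,1)\times\mathcal{H}\to G$: $[a_{k-1}(w_{-1},\dots,w_{-k+1}),a_k(w_{-1},\dots,w_{-k}))$ is partitioned into intervals $B_k(g|w_{-1},\dots,w_{-k})$ of length $b_k(g|\cdot)$, $g\in G$, and $f(u|\mathbf{w})=g$ on $\bigcup_kB_k(g|\cdot)$. Markovian coupling: $\tilde f(u|w)=f(a_1u|\mathbf{w})$ for $u\in[0,1)$, $w\in G$, any $\mathbf{w}\in\mathcal{H}$ with $w_{-1}=w$; $\tilde f^{(1)}=\tilde f$, $\tilde f^{(n)}(u_n,\dots,u_1|w)=\tilde f(u_n|\tilde f^{(n-1)}(u_{n-1},\dots,u_1|w))$. For fixed $g_0\in G$, $E_n=\{(u_0,u_{-1},\dots,u_{-n+1})\in[0,1)^n:\tilde f^{(n)}(u_0,\dots,u_{-n+1}|w)=\tilde f^{(n)}(u_0,\dots,u_{-n+1}|g_0)\ \forall w\in G\}$; in (ii), $(U_{s-1},\dots,U_0)$ is the point $(u_0,\dots,u_{-s+1})=(U_{s-1},\dots,U_0)$. $K(u)=\inf\{k\in\mathbf{N}:a_k>u\}$. *)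

theory Defs
  imports "HOL-Probability.Probability"
begin

text \<open>Alphabet: a countable type 'g. A history (w_{-1}, w_{-2}, ...) is encoded as
  w :: nat \<Rightarrow> 'g with w i = w_{-(i+1)}. The kernel is p g w = p(g | w).\<close>

text \<open>A word (s_0, s_{-1}, ..., s_{-n}) is the list [s_0, s_{-1}, ..., s_{-n}].
  The empty word is not forbidden; for n = 0 the clause reduces to
  "p(s_0 | w) = 0 for all w", i.e. s_0 is a forbidden letter.\<close>
fun forbidden :: "('g \<Rightarrow> (nat \<Rightarrow> 'g) \<Rightarrow> real) \<Rightarrow> 'g list \<Rightarrow> bool" where
  "forbidden p [] = False"
| "forbidden p (s # t) =
     (forbidden p t \<or> (\<forall>w. (\<forall>i<length t. w i = t ! i) \<longrightarrow> p s w = 0))"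

definition admissible :: "('g \<Rightarrow> (nat \<Rightarrow> 'g) \<Rightarrow> real) \<Rightarrow> (nat \<Rightarrow> 'g) set" where
  "admissible p = {w. \<forall>n. \<not> forbidden p (map w [0..<n])}"

definition aK :: "('g \<Rightarrow> (nat \<Rightarrow> 'g) \<Rightarrow> real) \<Rightarrow> nat \<Rightarrow> 'g \<Rightarrow> (nat \<Rightarrow> 'g) \<Rightarrow> real" where
  "aK p k g w = (INF z \<in> {z \<in> admissible p. \<forall>i<k. z i = w i}. p g z)"

definition bK :: "('g \<Rightarrow> (nat \<Rightarrow> 'g) \<Rightarrow> real) \<Rightarrow> nat \<Rightarrow> 'g \<Rightarrow> (nat \<Rightarrow> 'g) \<Rightarrow> real" where
  "bK p k g w = aK p k g w - (if k = 0 then 0 else aK p (k - 1) g w)"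

definition aW :: "('g \<Rightarrow> (nat \<Rightarrow> 'g) \<Rightarrow> real) \<Rightarrow> nat \<Rightarrow> (nat \<Rightarrow> 'g) \<Rightarrow> real" where
  "aW p k w = (\<Sum>\<^sub>\<infinity>g. aK p k g w)"

definition aPrev :: "('g \<Rightarrow> (nat \<Rightarrow> 'g) \<Rightarrow> real) \<Rightarrow> nat \<Rightarrow> (nat \<Rightarrow> 'g) \<Rightarrow> real" where
  "aPrev p k w = (if k = 0 then 0 else aW p (k - 1) w)"

definition aS :: "('g \<Rightarrow> (nat \<Rightarrow> 'g) \<Rightarrow> real) \<Rightarrow> nat \<Rightarrow> real" where
  "aS p k = (INF w \<in> admissible p. aW p k w)"

definition max_coupling ::
  "('g \<Rightarrow> (nat \<Rightarrow> 'g) \<Rightarrow> real) \<Rightarrow> (real \<Rightarrow> (nat \<Rightarrow> 'g) \<Rightarrow> 'g) \<Rightarrow> bool" where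
  "max_coupling p f =
    (\<exists>B :: nat \<Rightarrow> 'g \<Rightarrow> (nat \<Rightarrow> 'g) \<Rightarrow> real set.
      (\<forall>k g w w'. w \<in> admissible p \<longrightarrow> w' \<in> admissible p \<longrightarrow> (\<forall>i<k. w i = w' i)
          \<longrightarrow> B k g w = B k g w') \<and>
      (\<forall>k g w. w \<in> admissible p \<longrightarrow>
          is_interval (B k g w) \<and> measure lborel (B k g w) = bK p k g w) \<and>
      (\<forall>k w. w \<in> admissible p \<longrightarrow>
          disjoint_family (\<lambda>g. B k g w) \<and> (\<Union>g. B k g w) = {aPrev p k w ..< aW p k w}) \<and>
      (\<forall>w \<in> admissible p. \<forall>u \<in> {0..<1}. \<forall>k g. u \<in> B k g w \<longrightarrow> f u w = g))"

definition G0 :: "('g \<Rightarrow> (nat \<Rightarrow> 'g) \<Rightarrow> real) \<Rightarrow> 'g set" where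
  "G0 p = {g. \<exists>z \<in> admissible p. z 0 = g}"

definition ftil :: "('g \<Rightarrow> (nat \<Rightarrow> 'g) \<Rightarrow> real) \<Rightarrow> (real \<Rightarrow> (nat \<Rightarrow> 'g) \<Rightarrow> 'g) \<Rightarrow> real \<Rightarrow> 'g \<Rightarrow> 'g" where
  "ftil p f u g = f (aS p 1 * u) (SOME z. z \<in> admissible p \<and> z 0 = g)"

text \<open>Iterate: v i = u_{-i}; fiter n v w = \<tilde>f^{(n)}(u_0, u_{-1}, ..., u_{-n+1} | w),
  where u_{-n+1} is applied first and u_0 last.\<close>
primrec fiter :: "('g \<Rightarrow> (nat \<Rightarrow> 'g) \<Rightarrow> real) \<Rightarrow> (real \<Rightarrow> (nat \<Rightarrow> 'g) \<Rightarrow> 'g) \<Rightarrow> nat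
    \<Rightarrow> (nat \<Rightarrow> real) \<Rightarrow> 'g \<Rightarrow> 'g" where
  "fiter p f 0 v g = g"
| "fiter p f (Suc n) v g = ftil p f (v 0) (fiter p f n (\<lambda>i. v (Suc i)) g)"

text \<open>E_n, with the point (u_0, ..., u_{-n+1}) encoded as v with v i = u_{-i} (i < n).\<close>
definition E :: "('g \<Rightarrow> (nat \<Rightarrow> 'g) \<Rightarrow> real) \<Rightarrow> (real \<Rightarrow> (nat \<Rightarrow> 'g) \<Rightarrow> 'g) \<Rightarrow> nat \<Rightarrow> (nat \<Rightarrow> real) set" where
  "E p f n = {v. (\<forall>i<n. 0 \<le> v i \<and> v i < 1) \<and>
      (\<forall>g \<in> G0 p. \<forall>g' \<in> G0 p. fiter p f n v g = fiter p f n v g')}"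

definition Kfun :: "('g \<Rightarrow> (nat \<Rightarrow> 'g) \<Rightarrow> real) \<Rightarrow> real \<Rightarrow> nat" where
  "Kfun p u = (LEAST k. aS p k > u)"

text \<open>tau_0 (as an extended real; Sup of the empty set is -\<infinity>).\<close>
definition tau0 :: "('g \<Rightarrow> (nat \<Rightarrow> 'g) \<Rightarrow> real) \<Rightarrow> (real \<Rightarrow> (nat \<Rightarrow> 'g) \<Rightarrow> 'g)
    \<Rightarrow> (int \<Rightarrow> 'a \<Rightarrow> real) \<Rightarrow> 'a \<Rightarrow> ereal" where
  "tau0 p f U \<omega> = Sup (ereal ` real_of_int `
     {m. m < 0 \<and> (\<exists>l. m \<le> l \<and> l \<le> 0 \<and>
        (\<lambda>i. U (l - int i) \<omega> / aS p 1) \<in> E p f (nat (l - m + 1)) \<and>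
        (l < 0 \<longrightarrow> (\<forall>j. l + 1 \<le> j \<and> j \<le> 0 \<longrightarrow> int (Kfun p (U j \<omega>)) \<le> j - l)))})"

end

theory Submission
  imports Defs
begin

text \<open>Read the past backwards, \<open>x i = U (-i)\<close>, and call \<open>k\<close> a renewal if
  \<open>x i < a (k - i)\<close>, i.e. \<open>K (U (-i)) \<le> k - i\<close>, for all \<open>i < k\<close>. As \<open>a\<close> is increasing,
  renewals regenerate: after a renewal at \<open>n\<close> the later renewals are those of the shifted
  sequence, which is independent of the first \<open>n\<close> coordinates. A renewal at \<open>k\<close> has
  probability \<open>u k = a 1 \<cdots> a k\<close>; decomposing at the last renewal up to \<open>m\<close> gives the
  renewal equation \<open>\<Sum>n\<le>m. u n * g (m - n) = 1\<close>, where \<open>g j\<close> is the probability of no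
  renewal in \<open>[1, j]\<close>, so condition (i) forces \<open>g m \<rightarrow> 0\<close>. After each renewal \<open>k\<close> one
  tests, independently of the past, whether the next \<open>s\<close> uniforms divided by \<open>a 1\<close> lie in
  \<open>E s\<close>; by condition (ii) this has probability \<open>a 1 ^ s * P(E s) > 0\<close>. A renewal
  inequality shows that almost surely a test at some renewal \<open>k \<ge> 1\<close> succeeds, and then
  \<open>l = -k\<close>, \<open>m = -k - s + 1\<close> witness \<open>\<tau>\<^sub>0 > -\<infinity>\<close>.\<close>

section \<open>Uniform random variables\<close>

abbreviation uniform01 :: "real measure" where
  "uniform01 \<equiv> uniform_measure lborel {0..<1}"

lemma prob_space_uniform01: "prob_space uniform01"
  by (intro prob_space_uniform_measure) auto

lemma emeasure_uniform01:
  "B \<in> sets borel \<Longrightarrow> emeasure uniform01 B = emeasure lborel ({0..<1} \<inter> B)"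
  by (subst emeasure_uniform_measure) (auto simp: divide_ennreal_def)

lemma emeasure_uniform01_scaled:
  fixes c :: real
  assumes c: "0 < c" "c \<le> 1" and A: "A \<in> sets borel"
  shows "emeasure uniform01 {u. u < c \<and> u / c \<in> A} = ennreal c * emeasure uniform01 A"
proof -
  have B: "{0..<1} \<inter> A \<in> sets borel" using A by auto
  have set_eq: "{0..<1} \<inter> {u. u < c \<and> u / c \<in> A} = (\<lambda>u. inverse c * u) -` ({0..<1} \<inter> A)"
  proof -
    have "(0 \<le> u / c) = (0 \<le> u)" "(u / c < 1) = (u < c)" for u
      using c by (simp_all add: zero_le_divide_iff divide_less_eq)
    moreover have "inverse c * u = u / c" for u by (simp add: divide_inverse mult.commute)
    ultimately show ?thesis using c(2) by auto
  qed
  have meas: "{u. u < c \<and> u / c \<in> A} \<in> sets borel" using A by measurable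
  have "emeasure uniform01 {u. u < c \<and> u / c \<in> A}
      = emeasure lborel ((\<lambda>u. inverse c * u) -` ({0..<1} \<inter> A) \<inter> space lborel)"
    using emeasure_uniform01[OF meas] set_eq by (simp del: emeasure_uniform_measure)
  also have "\<dots> = emeasure (distr lborel borel ((*) (inverse c))) ({0..<1} \<inter> A)"
    using B by (subst emeasure_distr) auto
  also have "\<dots> = emeasure (density lborel (\<lambda>_. inverse \<bar>inverse c\<bar>)) ({0..<1} \<inter> A)"
    using c by (subst lborel_distr_mult) auto
  also have "\<dots> = ennreal c * emeasure lborel ({0..<1} \<inter> A)"
    using B c by (subst emeasure_density_const) auto
  also have "\<dots> = ennreal c * emeasure uniform01 A" using emeasure_uniform01[OF A] by simp
  finally show ?thesis .
qed

lemma emeasure_PiM_uniform01_scaled_box: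
  fixes c :: real
  assumes c: "0 < c" "c \<le> 1" and A: "\<And>i. i < s \<Longrightarrow> A i \<in> sets borel"
  shows "emeasure (PiM {..<s} (\<lambda>_. uniform01)) (Pi\<^sub>E {..<s} (\<lambda>i. {u. u < c \<and> u / c \<in> A i}))
    = ennreal (c ^ s) * emeasure (PiM {..<s} (\<lambda>_. uniform01)) (Pi\<^sub>E {..<s} A)"
proof -
  interpret product_prob_space "\<lambda>_. uniform01" "{..<s}"
    by (intro product_prob_spaceI prob_space_uniform01)
  have "emeasure (PiM {..<s} (\<lambda>_. uniform01)) (Pi\<^sub>E {..<s} (\<lambda>i. {u. u < c \<and> u / c \<in> A i}))
      = (\<Prod>i<s. ennreal c * emeasure uniform01 (A i))"
    using A c by (subst emeasure_PiM) (auto intro!: prod.cong emeasure_uniform01_scaled simp del: emeasure_uniform_measure)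
  also have "\<dots> = ennreal (c ^ s) * emeasure (PiM {..<s} (\<lambda>_. uniform01)) (Pi\<^sub>E {..<s} A)"
    using A c by (subst emeasure_PiM) (auto simp: prod.distrib ennreal_power)
  finally show ?thesis .
qed

text \<open>The image of the uniform measure on \<open>[0,c)\<^sup>s\<close> under \<open>y \<mapsto> y/c\<close> is uniform on
  \<open>[0,1)\<^sup>s\<close>; this is checked on boxes.\<close>
lemma emeasure_PiM_uniform01_scaled:
  fixes c :: real and s :: nat
  assumes c: "0 < c" "c \<le> 1" and X: "X \<in> sets (PiM {..<s} (\<lambda>_. borel :: real measure))"
  shows "emeasure (PiM {..<s} (\<lambda>_. uniform01))
      {y \<in> space (PiM {..<s} (\<lambda>_. uniform01)). (\<forall>i<s. y i < c) \<and> (\<lambda>i\<in>{..<s}. y i / c) \<in> X}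
    = ennreal (c ^ s) * emeasure (PiM {..<s} (\<lambda>_. uniform01)) X"
proof -
  let ?\<nu> = "PiM {..<s} (\<lambda>_. uniform01)"
  let ?\<nu>b = "PiM {..<s} (\<lambda>_. borel :: real measure)"
  interpret product_prob_space "\<lambda>_. uniform01" "{..<s}"
    by (intro product_prob_spaceI prob_space_uniform01)
  have sets_eq: "sets ?\<nu> = sets ?\<nu>b" by (intro sets_PiM_cong) auto
  define C where "C = {y \<in> space ?\<nu>. \<forall>i<s. y i < c}"
  define T where "T y = (\<lambda>i\<in>{..<s}. y i / c)" for y :: "nat \<Rightarrow> real"
  have T: "T \<in> ?\<nu> \<rightarrow>\<^sub>M ?\<nu>b"
    unfolding T_def measurable_cong_sets[OF sets_eq refl]
    by (rule measurable_PiM_single') (auto simp: space_PiM intro!: measurable_component_singleton)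
  have C: "C \<in> sets ?\<nu>"
  proof -
    have "C = {y \<in> space ?\<nu>b. \<forall>i<s. y i < c}" unfolding C_def by (simp add: space_PiM)
    also have "\<dots> \<in> sets ?\<nu>b" by measurable
    finally show ?thesis using sets_eq by simp
  qed
  define P where "P = density (distr (density ?\<nu> (indicator C)) ?\<nu>b T) (\<lambda>_. ennreal (1 / c ^ s))"
  have P_eq: "emeasure P Y = ennreal (1 / c ^ s) * emeasure ?\<nu> (C \<inter> (T -` Y \<inter> space ?\<nu>))"
    if Y: "Y \<in> sets ?\<nu>b" for Y
    unfolding P_def using Y T C measurable_sets[OF T Y]
    by (simp add: emeasure_density_const emeasure_distr emeasure_restricted
        measurable_cong_sets[OF sets_density refl])
  have "P = ?\<nu>"
  proof (rule PiM_eqI)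
    fix A assume A: "\<And>i. i \<in> {..<s} \<Longrightarrow> A i \<in> sets uniform01"
    have box: "Pi\<^sub>E {..<s} A \<in> sets ?\<nu>b" using A by (intro sets_PiM_I_finite) auto
    have "C \<inter> (T -` Pi\<^sub>E {..<s} A \<inter> space ?\<nu>) = Pi\<^sub>E {..<s} (\<lambda>i. {u. u < c \<and> u / c \<in> A i})"
      by (auto simp: C_def T_def space_PiM PiE_def Pi_def extensional_def)
    then have "emeasure P (Pi\<^sub>E {..<s} A)
        = ennreal (1 / c ^ s) * (ennreal (c ^ s) * emeasure ?\<nu> (Pi\<^sub>E {..<s} A))"
      using P_eq[OF box] A c by (simp add: emeasure_PiM_uniform01_scaled_box)
    also have "\<dots> = emeasure ?\<nu> (Pi\<^sub>E {..<s} A)"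
      using c by (simp add: ennreal_mult[symmetric] mult.assoc[symmetric])
    finally show "emeasure P (Pi\<^sub>E {..<s} A) = (\<Prod>i\<in>{..<s}. emeasure uniform01 (A i))"
      using A by (subst (asm) emeasure_PiM) auto
  qed (use sets_eq in \<open>auto simp: P_def\<close>)
  then have "emeasure ?\<nu> X = ennreal (1 / c ^ s) * emeasure ?\<nu> (C \<inter> (T -` X \<inter> space ?\<nu>))"
    using P_eq[OF X] by simp
  moreover have "C \<inter> (T -` X \<inter> space ?\<nu>)
      = {y \<in> space ?\<nu>. (\<forall>i<s. y i < c) \<and> (\<lambda>i\<in>{..<s}. y i / c) \<in> X}"
    unfolding C_def T_def by auto
  ultimately show ?thesis
    using c by (simp add: mult.assoc[symmetric] ennreal_mult[symmetric])
qed

lemma (in prob_space) indep_vars_reindex: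
  assumes ind: "indep_vars M' X (h ` I)" and inj: "inj_on h I"
  shows "indep_vars (\<lambda>i. M' (h i)) (\<lambda>i. X (h i)) I"
  unfolding indep_vars_def2
proof safe
  fix i assume "i \<in> I" then show "random_variable (M' (h i)) (X (h i))"
    using ind by (auto simp: indep_vars_def2)
next
  have F: "indep_sets (\<lambda>i. {X i -` A \<inter> space M |A. A \<in> sets (M' i)}) (h ` I)"
    using ind by (auto simp: indep_vars_def2)
  show "indep_sets (\<lambda>i. {X (h i) -` A \<inter> space M |A. A \<in> sets (M' (h i))}) I"
  proof (rule indep_setsI)
    fix i assume "i \<in> I" then show "{X (h i) -` A \<inter> space M |A. A \<in> sets (M' (h i))} \<subseteq> events"
      using F by (auto simp: indep_sets_def)
  next
    fix A J assume J: "J \<noteq> {}" "J \<subseteq> I" "finite J"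
      and A: "\<forall>j\<in>J. A j \<in> {X (h j) -` A \<inter> space M |A. A \<in> sets (M' (h j))}"
    define A' where "A' = (\<lambda>k. A (the_inv_into J h k))"
    have inj': "inj_on h J" using inj J by (metis inj_on_subset)
    have A'h: "A' (h j) = A j" if "j \<in> J" for j
      using that inj' by (simp add: A'_def the_inv_into_f_f)
    have "prob (\<Inter>k\<in>h ` J. A' k) = (\<Prod>k\<in>h ` J. prob (A' k))"
      by (rule indep_setsD[OF F]) (use J A A'h in auto)
    moreover have "(\<Inter>k\<in>h ` J. A' k) = (\<Inter>j\<in>J. A j)" using A'h by auto
    moreover have "(\<Prod>k\<in>h ` J. prob (A' k)) = (\<Prod>j\<in>J. prob (A j))"
      using A'h inj' by (simp add: prod.reindex)
    ultimately show "prob (\<Inter>j\<in>J. A j) = (\<Prod>j\<in>J. prob (A j))" by simp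
  qed
qed

lemma measurable_extend_zero:
  fixes n :: nat
  shows "(\<lambda>y i. if i < n then y i else (0::real))
     \<in> PiM {..<n} (\<lambda>_. borel) \<rightarrow>\<^sub>M PiM UNIV (\<lambda>_. borel)"
proof (rule measurable_PiM_single')
  fix i :: nat
  show "(\<lambda>y. if i < n then y i else 0) \<in> borel_measurable (PiM {..<n} (\<lambda>_. borel))"
    by (cases "i < n") (auto intro: measurable_component_singleton)
qed (auto simp: space_PiM)

definition determined_by_prefix :: "((nat \<Rightarrow> 'b) \<Rightarrow> bool) \<Rightarrow> nat \<Rightarrow> bool" where
  "determined_by_prefix P n \<longleftrightarrow> (\<forall>x y. (\<forall>i<n. x i = y i) \<longrightarrow> P x = P y)"

lemma determined_by_prefixD:
  "determined_by_prefix P n \<Longrightarrow> \<forall>i<n. x i = y i \<Longrightarrow> P x = P y"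
  unfolding determined_by_prefix_def by blast

lemma determined_by_prefix_mono:
  "determined_by_prefix P n \<Longrightarrow> n \<le> k \<Longrightarrow> determined_by_prefix P k"
  unfolding determined_by_prefix_def by auto

definition shifted :: "nat \<Rightarrow> (nat \<Rightarrow> 'b) \<Rightarrow> nat \<Rightarrow> 'b" where
  "shifted n x = (\<lambda>i. x (n + i))"

lemma shifted_0 [simp]: "shifted 0 x = x"
  by (simp add: shifted_def)

lemma shifted_shifted [simp]: "shifted j (shifted k x) = shifted (k + j) x"
  by (simp add: shifted_def add.assoc)

lemma measurable_shifted [measurable]:
  "shifted n \<in> PiM UNIV (\<lambda>_. M) \<rightarrow>\<^sub>M PiM UNIV (\<lambda>_. M)"
  unfolding shifted_def by (rule measurable_PiM_single') (auto simp: space_PiM)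

locale iid_uniform = prob_space M for M :: "'a measure" +
  fixes U :: "int \<Rightarrow> 'a \<Rightarrow> real"
  assumes indep_U: "indep_vars (\<lambda>_. borel) U UNIV"
    and distr_U: "\<And>i. distr M borel (U i) = uniform01"
begin

abbreviation \<Omega> :: "(nat \<Rightarrow> real) measure" where
  "\<Omega> \<equiv> PiM UNIV (\<lambda>_. borel)"

lemma measurable_U [measurable]: "U i \<in> borel_measurable M"
  using indep_U by (auto simp: indep_vars_def2)

lemma indep_U_reindex: "inj_on h I \<Longrightarrow> indep_vars (\<lambda>_. borel) (\<lambda>i. U (h i)) I"
  using indep_vars_reindex[of "\<lambda>_. borel" U h I] indep_vars_subset[OF indep_U] by auto

lemma prob_reindexed:
  assumes "inj h" and P: "Measurable.pred \<Omega> P"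
  shows "prob {\<omega> \<in> space M. P (\<lambda>i. U (h i) \<omega>)}
    = measure (PiM UNIV (\<lambda>_. uniform01)) {x \<in> space \<Omega>. P x}"
proof -
  have m: "(\<lambda>\<omega> i. U (h i) \<omega>) \<in> M \<rightarrow>\<^sub>M \<Omega>"
    by (rule measurable_PiM_single') (auto simp: space_PiM)
  have "distr M \<Omega> (\<lambda>\<omega>. \<lambda>i\<in>UNIV. U (h i) \<omega>) = (\<Pi>\<^sub>M i\<in>UNIV. distr M borel (U (h i)))"
    using indep_U_reindex[of h UNIV] assms(1) by (subst (asm) indep_vars_iff_distr_eq_PiM) auto
  then have "measure (PiM UNIV (\<lambda>_. uniform01)) {x \<in> space \<Omega>. P x}
      = measure (distr M \<Omega> (\<lambda>\<omega> i. U (h i) \<omega>)) {x \<in> space \<Omega>. P x}"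
    by (simp add: distr_U restrict_UNIV)
  also have "\<dots> = prob ((\<lambda>\<omega> i. U (h i) \<omega>) -` {x \<in> space \<Omega>. P x} \<inter> space M)"
    using P m by (subst measure_distr) auto
  also have "\<dots> = prob {\<omega> \<in> space M. P (\<lambda>i. U (h i) \<omega>)}"
    using m by (intro arg_cong[where f=prob]) (auto simp: measurable_def)
  finally show ?thesis by simp
qed

lemma prob_reindexed_prefix:
  assumes h: "inj h" and s: "0 < s" and P: "Measurable.pred \<Omega> P"
    and d: "determined_by_prefix P s"
  shows "prob {\<omega> \<in> space M. P (\<lambda>i. U (h i) \<omega>)} = measure (PiM {..<s} (\<lambda>_. uniform01))
      {y \<in> space (PiM {..<s} (\<lambda>_. borel)). P (\<lambda>i. if i < s then y i else 0)}"
proof -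
  let ?Y = "\<lambda>\<omega>. \<lambda>i\<in>{..<s}. U (h i) \<omega>"
  define X where "X = {y \<in> space (PiM {..<s} (\<lambda>_. borel)). P (\<lambda>i. if i < s then y i else 0)}"
  have X: "X \<in> sets (PiM {..<s} (\<lambda>_. borel))"
    unfolding X_def using measurable_compose[OF measurable_extend_zero P] by (simp add: pred_def)
  have "distr M (PiM {..<s} (\<lambda>_. borel)) ?Y = PiM {..<s} (\<lambda>i. distr M borel (U (h i)))"
    using s h by (intro indep_vars_iff_distr_eq_PiM[THEN iffD1] indep_U_reindex)
      (auto simp: inj_on_def inj_def)
  then have "measure (PiM {..<s} (\<lambda>_. uniform01)) X
      = measure (distr M (PiM {..<s} (\<lambda>_. borel)) ?Y) X"
    by (simp only: distr_U)
  also have "\<dots> = prob (?Y -` X \<inter> space M)"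
    using X by (subst measure_distr) (auto intro!: measurable_restrict)
  also have "?Y -` X \<inter> space M = {\<omega> \<in> space M. P (\<lambda>i. U (h i) \<omega>)}"
  proof -
    have "P (\<lambda>i. if i < s then ?Y \<omega> i else 0) = P (\<lambda>i. U (h i) \<omega>)" for \<omega>
      by (rule determined_by_prefixD[OF d]) simp
    then show ?thesis by (auto simp: X_def space_PiM)
  qed
  finally show ?thesis by (simp add: X_def)
qed

definition past :: "nat \<Rightarrow> 'a \<Rightarrow> nat \<Rightarrow> real" where
  "past n \<omega> = (\<lambda>i. U (- int (n + i)) \<omega>)"

definition Pr :: "((nat \<Rightarrow> real) \<Rightarrow> bool) \<Rightarrow> real" where
  "Pr P = prob {\<omega> \<in> space M. P (past 0 \<omega>)}"

lemma measurable_past [measurable]: "past n \<in> M \<rightarrow>\<^sub>M \<Omega>"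
  unfolding past_def by (rule measurable_PiM_single') (auto simp: space_PiM)

lemma past_eq_shifted: "past n \<omega> = shifted n (past 0 \<omega>)"
  by (simp add: past_def shifted_def)

lemma prob_past: "Measurable.pred \<Omega> P \<Longrightarrow> prob {\<omega> \<in> space M. P (past n \<omega>)} = Pr P"
  using prob_reindexed[of "\<lambda>i. - int (n + i)" P] prob_reindexed[of "\<lambda>i. - int i" P]
  by (simp add: Pr_def past_def inj_def)

lemma Pr_nonneg: "0 \<le> Pr P"
  by (simp add: Pr_def)

lemma Pr_le_1: "Pr P \<le> 1"
  by (simp add: Pr_def)

lemma Pr_True: "Pr (\<lambda>_. True) = 1"
  by (simp add: Pr_def prob_space)

lemma Pr_mono: "Measurable.pred \<Omega> Q \<Longrightarrow> (\<And>x. P x \<Longrightarrow> Q x) \<Longrightarrow> Pr P \<le> Pr Q"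
  unfolding Pr_def by (intro finite_measure_mono) auto

lemma Pr_not: "Measurable.pred \<Omega> P \<Longrightarrow> Pr (\<lambda>x. \<not> P x) = 1 - Pr P"
proof -
  assume P: "Measurable.pred \<Omega> P"
  have "{\<omega> \<in> space M. \<not> P (past 0 \<omega>)} = space M - {\<omega> \<in> space M. P (past 0 \<omega>)}" by auto
  then show ?thesis unfolding Pr_def using P by (simp add: prob_compl)
qed

lemma Pr_disj_le:
  "Measurable.pred \<Omega> P \<Longrightarrow> Measurable.pred \<Omega> Q \<Longrightarrow> Pr (\<lambda>x. P x \<or> Q x) \<le> Pr P + Pr Q"
proof -
  assume P: "Measurable.pred \<Omega> P" and Q: "Measurable.pred \<Omega> Q"
  have "{\<omega> \<in> space M. P (past 0 \<omega>) \<or> Q (past 0 \<omega>)}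
      = {\<omega> \<in> space M. P (past 0 \<omega>)} \<union> {\<omega> \<in> space M. Q (past 0 \<omega>)}" by auto
  then show ?thesis unfolding Pr_def using P Q by (simp add: measure_Un_le)
qed

lemma Pr_Bex_le:
  assumes "finite K" and "\<And>k. k \<in> K \<Longrightarrow> Measurable.pred \<Omega> (P k)"
  shows "Pr (\<lambda>x. \<exists>k\<in>K. P k x) \<le> (\<Sum>k\<in>K. Pr (P k))"
proof -
  have "prob (\<Union>k\<in>K. {\<omega> \<in> space M. P k (past 0 \<omega>)})
      \<le> (\<Sum>k\<in>K. prob {\<omega> \<in> space M. P k (past 0 \<omega>)})"
    using assms by (intro finite_measure_subadditive_finite) auto
  moreover have "(\<Union>k\<in>K. {\<omega> \<in> space M. P k (past 0 \<omega>)}) = {\<omega> \<in> space M. \<exists>k\<in>K. P k (past 0 \<omega>)}"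
    by auto
  ultimately show ?thesis by (simp add: Pr_def)
qed

lemma Pr_Bex_disjoint:
  assumes "finite K" and "\<And>k. k \<in> K \<Longrightarrow> Measurable.pred \<Omega> (P k)"
    and "\<And>k k' x. k \<in> K \<Longrightarrow> k' \<in> K \<Longrightarrow> P k x \<Longrightarrow> P k' x \<Longrightarrow> k = k'"
  shows "Pr (\<lambda>x. \<exists>k\<in>K. P k x) = (\<Sum>k\<in>K. Pr (P k))"
proof -
  have "prob (\<Union>k\<in>K. {\<omega> \<in> space M. P k (past 0 \<omega>)})
      = (\<Sum>k\<in>K. prob {\<omega> \<in> space M. P k (past 0 \<omega>)})"
    using assms by (intro finite_measure_finite_Union) (auto simp: disjoint_family_on_def)
  moreover have "(\<Union>k\<in>K. {\<omega> \<in> space M. P k (past 0 \<omega>)}) = {\<omega> \<in> space M. \<exists>k\<in>K. P k (past 0 \<omega>)}"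
    by auto
  ultimately show ?thesis by (simp add: Pr_def)
qed

lemma Pr_first_less: "0 \<le> c \<Longrightarrow> c \<le> 1 \<Longrightarrow> Pr (\<lambda>x. x 0 < c) = c"
proof -
  assume c: "0 \<le> c" "c \<le> 1"
  have "Pr (\<lambda>x. x 0 < c) = prob (U 0 -` {..<c} \<inter> space M)"
    unfolding Pr_def past_def by (intro arg_cong[where f=prob]) auto
  also have "\<dots> = measure (distr M borel (U 0)) {..<c}"
    by (subst measure_distr) auto
  also have "\<dots> = measure lborel ({0..<1} \<inter> {..<c})"
    by (simp add: distr_U)
  also have "{0..<1} \<inter> {..<c} = {0..<c}" using c by auto
  finally show ?thesis using c by simp
qed

lemma indep_var_prefix_suffix:
  "indep_var (PiM {..<n} (\<lambda>_. borel)) (\<lambda>\<omega>. \<lambda>i\<in>{..<n}. U (- int i) \<omega>)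
     (PiM {n..} (\<lambda>_. borel)) (\<lambda>\<omega>. \<lambda>i\<in>{n..}. U (- int i) \<omega>)"
proof -
  define K where "K = case_bool {..<n} {n..}"
  have "indep_vars (\<lambda>_. borel) (\<lambda>i \<omega>. U (- int i) \<omega>) (UNIV::nat set)"
    by (rule indep_U_reindex) (auto simp: inj_on_def)
  then have "indep_vars (\<lambda>j. PiM (K j) (\<lambda>_. borel)) (\<lambda>j \<omega>. \<lambda>i\<in>K j. U (- int i) \<omega>) UNIV"
    by (rule indep_vars_restrict) (auto simp: K_def disjoint_family_on_def split: bool.split)
  then show ?thesis
    unfolding indep_var_def
    by (rule indep_vars_cong[THEN iffD1, rotated -1]) (auto simp: K_def split: bool.split)
qed

lemma Pr_shifted_mult:
  assumes P: "Measurable.pred \<Omega> P" and Q: "Measurable.pred \<Omega> Q"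
    and d: "determined_by_prefix P n"
  shows "Pr (\<lambda>x. P x \<and> Q (shifted n x)) = Pr P * Pr Q"
proof -
  let ?A = "\<lambda>\<omega>. \<lambda>i\<in>{..<n}. U (- int i) \<omega>" and ?B = "\<lambda>\<omega>. \<lambda>i\<in>{n..}. U (- int i) \<omega>"
  let ?ext = "\<lambda>y i. if i < n then y i else (0::real)" and ?sh = "\<lambda>y i. y (n + i) :: real"
  have sh: "?sh \<in> PiM {n..} (\<lambda>_. borel) \<rightarrow>\<^sub>M \<Omega>"
    by (rule measurable_PiM_single') (auto simp: space_PiM intro!: measurable_component_singleton)
  define Xa where "Xa = {y \<in> space (PiM {..<n} (\<lambda>_. borel::real measure)). P (?ext y)}"
  define Xb where "Xb = {y \<in> space (PiM {n..} (\<lambda>_. borel::real measure)). Q (?sh y)}"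
  have Xa: "Xa \<in> sets (PiM {..<n} (\<lambda>_. borel))"
    unfolding Xa_def using measurable_compose[OF measurable_extend_zero P] by (simp add: pred_def)
  have Xb: "Xb \<in> sets (PiM {n..} (\<lambda>_. borel))"
    unfolding Xb_def using measurable_compose[OF sh Q] by (simp add: pred_def)
  have eqa: "P (?ext (?A \<omega>)) = P (past 0 \<omega>)" for \<omega>
    by (rule determined_by_prefixD[OF d]) (auto simp: past_def)
  have eqb: "?sh (?B \<omega>) = past n \<omega>" for \<omega>
    by (auto simp: past_def)
  have "prob ((\<lambda>\<omega>. (?A \<omega>, ?B \<omega>)) -` (Xa \<times> Xb) \<inter> space M)
      = prob (?A -` Xa \<inter> space M) * prob (?B -` Xb \<inter> space M)"
    by (rule indep_varD[OF indep_var_prefix_suffix Xa Xb])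
  moreover have "(\<lambda>\<omega>. (?A \<omega>, ?B \<omega>)) -` (Xa \<times> Xb) \<inter> space M
      = {\<omega> \<in> space M. P (past 0 \<omega>) \<and> Q (past n \<omega>)}"
    using eqa eqb by (auto simp: Xa_def Xb_def space_PiM)
  moreover have "?A -` Xa \<inter> space M = {\<omega> \<in> space M. P (past 0 \<omega>)}"
    using eqa by (auto simp: Xa_def space_PiM)
  moreover have "?B -` Xb \<inter> space M = {\<omega> \<in> space M. Q (past n \<omega>)}"
    using eqb by (auto simp: Xb_def space_PiM)
  ultimately show ?thesis
    using prob_past[OF Q, of n] by (simp add: Pr_def past_eq_shifted[of n])
qed

end

section \<open>A renewal argument\<close>

lemma convolution_eventually_le:
  fixes w y :: "nat \<Rightarrow> real"
  assumes w_nonneg: "\<And>k. 0 \<le> w k" and w_sum: "\<And>K. (\<Sum>k\<in>{c..K}. w k) \<le> \<rho>"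
    and y: "antimono y" "\<And>m. 0 \<le> y m" "\<And>m. y m \<le> 1" and \<delta>: "\<delta> > 0"
  shows "eventually (\<lambda>m. (\<Sum>k\<in>{c..m}. w k * y (m - k)) \<le> \<rho> * y N + \<delta>) sequentially"
proof -
  define S where "S K = (\<Sum>k\<in>{c..K}. w k)" for K
  have S_mono: "S K \<le> S K'" if "K \<le> K'" for K K'
    unfolding S_def using that w_nonneg by (intro sum_mono2) auto
  have bdd: "bdd_above (range S)" using w_sum unfolding S_def by (auto intro!: bdd_aboveI)
  obtain K0 where K0: "S K0 > (SUP K. S K) - \<delta>"
    using less_cSUP_iff[of UNIV S "(SUP K. S K) - \<delta>"] bdd \<delta> by auto
  have "(\<Sum>k\<in>{c..m}. w k * y (m - k)) \<le> \<rho> * y N + \<delta>" if m: "K0 + N \<le> m" for m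
  proof -
    have "(\<Sum>k\<in>{c..m}. w k * y (m - k)) \<le> (\<Sum>k\<in>{c..m}. w k * y N + (if m - N < k then w k else 0))"
    proof (rule sum_mono)
      fix k assume k: "k \<in> {c..m}"
      show "w k * y (m - k) \<le> w k * y N + (if m - N < k then w k else 0)"
      proof (cases "m - N < k")
        case True
        have "w k * y (m - k) \<le> w k" using w_nonneg[of k] y(3)[of "m - k"] by (simp add: mult_left_le)
        moreover have "0 \<le> w k * y N" using w_nonneg[of k] y(2)[of N] by simp
        ultimately have "w k * y (m - k) \<le> w k * y N + w k" by linarith
        with True show ?thesis by simp
      next
        case False
        then have "N \<le> m - k" using k m by auto
        then have "y (m - k) \<le> y N" using y(1) by (auto simp: antimono_def)
        then show ?thesis using False w_nonneg[of k] by (simp add: mult_left_mono)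
      qed
    qed
    also have "\<dots> = y N * S m + (\<Sum>k\<in>{c..m} - {c..m - N}. w k)"
      by (simp add: sum.distrib S_def sum_distrib_left mult.commute sum.If_cases Diff_eq)
        (auto intro!: sum.cong)
    also have "(\<Sum>k\<in>{c..m} - {c..m - N}. w k) = S m - S (m - N)"
      unfolding S_def by (subst sum_diff) auto
    also have "S m - S (m - N) \<le> \<delta>"
      using cSUP_upper[OF UNIV_I bdd, of m] S_mono[of K0 "m - N"] K0 m by linarith
    also have "y N * S m \<le> y N * \<rho>"
      using y(2)[of N] w_sum[of m] unfolding S_def by (simp add: mult_left_mono)
    finally show ?thesis by (simp add: mult.commute)
  qed
  then show ?thesis unfolding eventually_sequentially by blast
qed

lemma renewal_ineq_eventually_le:
  fixes w x y e :: "nat \<Rightarrow> real"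
  assumes w_nonneg: "\<And>k. 0 \<le> w k" and w_sum: "\<And>K. (\<Sum>k\<in>{c..K}. w k) \<le> \<rho>"
    and y: "antimono y" "\<And>m. 0 \<le> y m" "\<And>m. y m \<le> 1"
    and e: "\<And>\<delta>. \<delta> > 0 \<Longrightarrow> eventually (\<lambda>m. e m \<le> \<delta>) sequentially"
    and x: "\<And>m. x m \<le> e m + (\<Sum>k\<in>{c..m}. w k * y (m - k))"
    and \<delta>: "\<delta> > 0"
  shows "eventually (\<lambda>m. x m \<le> \<rho> * y N + \<delta>) sequentially"
  using e[OF half_gt_zero[OF \<delta>]]
    convolution_eventually_le[OF w_nonneg w_sum y half_gt_zero[OF \<delta>], of N]
proof eventually_elim
  case (elim m)
  have "x m \<le> e m + (\<Sum>k\<in>{c..m}. w k * y (m - k))" by (rule x)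
  with elim show ?case by linarith
qed

locale renewal_success = iid_uniform M U for M :: "'a measure" and U +
  fixes a :: "nat \<Rightarrow> real" and s :: nat and B :: "(nat \<Rightarrow> real) \<Rightarrow> bool"
  assumes mono_a: "mono a" and a1_pos: "a 1 > 0" and a_le_1: "\<And>t. a t \<le> 1"
    and not_summable_prod_a: "\<not> summable (\<lambda>n. \<Prod>m = 1..Suc n. a m)"
    and measurable_B [measurable]: "Measurable.pred \<Omega> B"
    and determined_B: "determined_by_prefix B s"
    and s_pos: "1 \<le> s" and Pr_B_pos: "Pr B > 0"
begin

text \<open>On \<open>past 0 \<omega>\<close> this is the condition \<open>K(U\<^sub>j) \<le> j - l\<close> of \<open>\<tau>\<^sub>0\<close> for \<open>l = -n\<close>.\<close>
definition renewal_at :: "nat \<Rightarrow> (nat \<Rightarrow> real) \<Rightarrow> bool" where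
  "renewal_at n x \<longleftrightarrow> (\<forall>i<n. x i < a (n - i))"

lemma measurable_renewal_at [measurable]: "Measurable.pred \<Omega> (renewal_at n)"
  unfolding renewal_at_def by measurable

lemma renewal_at_0 [simp]: "renewal_at 0 x"
  by (simp add: renewal_at_def)

lemma determined_renewal_at: "determined_by_prefix (renewal_at n) n"
  by (auto simp: determined_by_prefix_def renewal_at_def)

lemma renewal_at_Suc: "renewal_at (Suc n) x \<longleftrightarrow> x 0 < a (Suc n) \<and> renewal_at n (shifted 1 x)"
  unfolding renewal_at_def shifted_def by (auto simp: less_Suc_eq_0_disj)

text \<open>Monotonicity of \<open>a\<close> makes the constraints on the first \<open>n\<close> coordinates redundant.\<close>
lemma renewal_at_shifted:
  assumes "n \<le> k" and "renewal_at n x"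
  shows "renewal_at k x \<longleftrightarrow> renewal_at (k - n) (shifted n x)"
proof
  assume "renewal_at k x"
  then show "renewal_at (k - n) (shifted n x)"
    using assms(1) by (auto simp: renewal_at_def shifted_def)
next
  assume shifted: "renewal_at (k - n) (shifted n x)"
  show "renewal_at k x" unfolding renewal_at_def
  proof (intro allI impI)
    fix i assume "i < k"
    show "x i < a (k - i)"
    proof (cases "i < n")
      case True
      then have "x i < a (n - i)" using assms(2) by (simp add: renewal_at_def)
      also have "\<dots> \<le> a (k - i)" using assms(1) by (intro monoD[OF mono_a]) auto
      finally show ?thesis .
    next
      case False
      then obtain j where "i = n + j" "j < k - n" using \<open>i < k\<close> by (metis add_diff_inverse_nat less_diff_conv2 assms(1) not_less add.commute)
      then show ?thesis using shifted by (auto simp: renewal_at_def shifted_def algebra_simps)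
    qed
  qed
qed

definition renewal_prob :: "nat \<Rightarrow> real" where
  "renewal_prob n = Pr (renewal_at n)"

lemma renewal_prob_nonneg: "0 \<le> renewal_prob n"
  by (simp add: renewal_prob_def Pr_nonneg)

lemma renewal_prob_eq_prod: "renewal_prob n = (\<Prod>t = 1..n. a t)"
proof (induction n)
  case 0
  have "renewal_at 0 = (\<lambda>_. True)" by auto
  then show ?case by (simp add: renewal_prob_def Pr_True)
next
  case (Suc n)
  have "determined_by_prefix (\<lambda>x. x 0 < a (Suc n)) 1"
    by (simp add: determined_by_prefix_def)
  moreover have "0 \<le> a (Suc n)"
    using a1_pos monoD[OF mono_a, of 1 "Suc n"] by simp
  ultimately have "renewal_prob (Suc n) = a (Suc n) * renewal_prob n"
    unfolding renewal_prob_def renewal_at_Suc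
    by (subst Pr_shifted_mult) (auto simp: Pr_first_less a_le_1)
  then show ?case using Suc by (simp add: prod.nat_ivl_Suc' mult.commute)
qed

definition no_renewal :: "nat \<Rightarrow> (nat \<Rightarrow> real) \<Rightarrow> bool" where
  "no_renewal j x \<longleftrightarrow> (\<forall>k\<in>{1..j}. \<not> renewal_at k x)"

definition no_renewal_prob :: "nat \<Rightarrow> real" where
  "no_renewal_prob j = Pr (no_renewal j)"

lemma measurable_no_renewal [measurable]: "Measurable.pred \<Omega> (no_renewal j)"
  unfolding no_renewal_def by measurable

lemma no_renewal_prob_nonneg: "0 \<le> no_renewal_prob j"
  by (simp add: no_renewal_prob_def Pr_nonneg)

lemma antimono_no_renewal_prob: "antimono no_renewal_prob"
  unfolding antimono_def no_renewal_prob_def by (auto intro!: Pr_mono simp: no_renewal_def)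

definition last_renewal :: "nat \<Rightarrow> nat \<Rightarrow> (nat \<Rightarrow> real) \<Rightarrow> bool" where
  "last_renewal m n x \<longleftrightarrow> renewal_at n x \<and> no_renewal (m - n) (shifted n x)"

lemma measurable_last_renewal [measurable]: "Measurable.pred \<Omega> (last_renewal m n)"
  unfolding last_renewal_def by measurable

lemma last_renewal_iff:
  assumes "n \<le> m"
  shows "last_renewal m n x \<longleftrightarrow> renewal_at n x \<and> (\<forall>k\<in>{n<..m}. \<not> renewal_at k x)"
proof
  assume last: "last_renewal m n x"
  then have n: "renewal_at n x" by (simp add: last_renewal_def)
  have "\<not> renewal_at k x" if "k \<in> {n<..m}" for k
  proof
    assume "renewal_at k x"
    then have "renewal_at (k - n) (shifted n x)" using renewal_at_shifted[of n k x] n that by auto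
    moreover have "k - n \<in> {1..m - n}" using that by auto
    ultimately show False using last by (auto simp: last_renewal_def no_renewal_def)
  qed
  with n show "renewal_at n x \<and> (\<forall>k\<in>{n<..m}. \<not> renewal_at k x)" by blast
next
  assume n: "renewal_at n x \<and> (\<forall>k\<in>{n<..m}. \<not> renewal_at k x)"
  have "\<not> renewal_at j (shifted n x)" if "j \<in> {1..m - n}" for j
  proof
    assume "renewal_at j (shifted n x)"
    then have "renewal_at (n + j) x" using renewal_at_shifted[of n "n + j" x] n by auto
    moreover have "n + j \<in> {n<..m}" using that assms by auto
    ultimately show False using n by auto
  qed
  with n show "last_renewal m n x" by (simp add: last_renewal_def no_renewal_def)
qed

lemma last_renewal_unique:
  "last_renewal m n x \<Longrightarrow> last_renewal m n' x \<Longrightarrow> n \<le> m \<Longrightarrow> n' \<le> m \<Longrightarrow> n = n'"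
  by (cases n n' rule: linorder_cases) (auto simp: last_renewal_iff)

lemma exists_last_renewal: "\<exists>n\<le>m. last_renewal m n x"
proof -
  define n where "n = Max {n. n \<le> m \<and> renewal_at n x}"
  have fin: "finite {n. n \<le> m \<and> renewal_at n x}" by auto
  have n: "n \<le> m" "renewal_at n x"
    using Max_in[OF fin] renewal_at_0 unfolding n_def by blast+
  moreover have "\<forall>k\<in>{n<..m}. \<not> renewal_at k x"
    using Max_ge[OF fin] unfolding n_def by fastforce
  ultimately show ?thesis using last_renewal_iff by blast
qed

lemma Pr_last_renewal: "Pr (last_renewal m n) = renewal_prob n * no_renewal_prob (m - n)"
  unfolding last_renewal_def renewal_prob_def no_renewal_prob_def
  by (rule Pr_shifted_mult) (auto intro: determined_renewal_at)

lemma renewal_equation: "(\<Sum>n\<le>m. renewal_prob n * no_renewal_prob (m - n)) = 1"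
proof -
  have "(\<Sum>n\<le>m. Pr (last_renewal m n)) = Pr (\<lambda>x. \<exists>n\<in>{..m}. last_renewal m n x)"
    by (rule Pr_Bex_disjoint[symmetric]) (auto intro: last_renewal_unique)
  also have "(\<lambda>x. \<exists>n\<in>{..m}. last_renewal m n x) = (\<lambda>_. True)"
  proof
    fix x show "(\<exists>n\<in>{..m}. last_renewal m n x) = True" using exists_last_renewal[of m x] by auto
  qed
  finally show ?thesis by (simp add: Pr_last_renewal Pr_True)
qed

lemma no_renewal_prob_mult_sum_le: "no_renewal_prob m * (\<Sum>n\<le>m. renewal_prob n) \<le> 1"
proof -
  have "no_renewal_prob m * (\<Sum>n\<le>m. renewal_prob n) = (\<Sum>n\<le>m. renewal_prob n * no_renewal_prob m)"
    by (simp add: sum_distrib_left mult.commute)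
  also have "\<dots> \<le> (\<Sum>n\<le>m. renewal_prob n * no_renewal_prob (m - n))"
    using antimono_no_renewal_prob renewal_prob_nonneg
    by (intro sum_mono mult_left_mono) (auto simp: antimono_def)
  finally show ?thesis using renewal_equation by simp
qed

lemma sum_renewal_prob_unbounded: "\<exists>m. (\<Sum>n\<le>m. renewal_prob n) > C"
proof (rule ccontr)
  assume "\<not> ?thesis"
  then have bound: "(\<Sum>n\<le>m. renewal_prob n) \<le> C" for m by (simp add: not_less)
  have "summable (\<lambda>n. renewal_prob (Suc n))"
  proof (rule summableI_nonneg_bounded)
    fix n
    have "(\<Sum>i<n. renewal_prob (Suc i)) = (\<Sum>i\<in>Suc ` {..<n}. renewal_prob i)"
      by (simp add: sum.reindex)
    also have "\<dots> \<le> (\<Sum>i\<le>n. renewal_prob i)"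
      using renewal_prob_nonneg by (intro sum_mono2) auto
    finally
    show "(\<Sum>i<n. renewal_prob (Suc i)) \<le> C" using bound[of n] by linarith
  qed (rule renewal_prob_nonneg)
  then show False using not_summable_prod_a by (simp add: renewal_prob_eq_prod)
qed

lemma no_renewal_prob_eventually_le:
  "\<delta> > 0 \<Longrightarrow> eventually (\<lambda>m. no_renewal_prob m \<le> \<delta>) sequentially"
proof -
  assume \<delta>: "\<delta> > 0"
  obtain N where N: "(\<Sum>n\<le>N. renewal_prob n) > 1 / \<delta>"
    using sum_renewal_prob_unbounded by blast
  then have "no_renewal_prob N * (1 / \<delta>) \<le> no_renewal_prob N * (\<Sum>n\<le>N. renewal_prob n)"
    using no_renewal_prob_nonneg[of N] by (intro mult_left_mono) auto
  then have "no_renewal_prob N * (1 / \<delta>) \<le> 1"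
    using no_renewal_prob_mult_sum_le[of N] by linarith
  then have "no_renewal_prob N \<le> \<delta>" using \<delta> by (simp add: field_simps)
  then show ?thesis
    using antimono_no_renewal_prob unfolding eventually_sequentially antimono_def
    by (blast intro: order_trans)
qed

definition no_renewal_from_prob :: "nat \<Rightarrow> real" where
  "no_renewal_from_prob m = Pr (\<lambda>x. \<forall>k\<in>{s..m}. \<not> renewal_at k x)"

text \<open>No renewal in \<open>[s, m]\<close> means the last renewal up to \<open>m\<close> occurs before \<open>s\<close>.\<close>
lemma no_renewal_from_prob_le:
  "s \<le> m \<Longrightarrow> no_renewal_from_prob m \<le> real s * no_renewal_prob (m - s)"
proof -
  assume "s \<le> m"
  have "no_renewal_from_prob m \<le> Pr (\<lambda>x. \<exists>n\<in>{..<s}. last_renewal m n x)"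
    unfolding no_renewal_from_prob_def
  proof (rule Pr_mono)
    fix x assume none: "\<forall>k\<in>{s..m}. \<not> renewal_at k x"
    obtain n where "n \<le> m" "last_renewal m n x" using exists_last_renewal by blast
    moreover from this have "n < s" using none by (auto simp: last_renewal_def not_less)
    ultimately show "\<exists>n\<in>{..<s}. last_renewal m n x" by auto
  qed auto
  also have "\<dots> \<le> (\<Sum>n<s. Pr (last_renewal m n))" by (rule Pr_Bex_le) auto
  also have "\<dots> \<le> (\<Sum>n<s. no_renewal_prob (m - s))"
  proof (rule sum_mono)
    fix n assume "n \<in> {..<s}"
    then have "no_renewal_prob (m - n) \<le> no_renewal_prob (m - s)"
      using antimono_no_renewal_prob by (auto simp: antimono_def)
    moreover have "renewal_prob n * no_renewal_prob (m - n) \<le> no_renewal_prob (m - n)"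
      unfolding renewal_prob_def
      by (rule mult_left_le_one_le[OF no_renewal_prob_nonneg Pr_nonneg Pr_le_1])
    ultimately show "Pr (last_renewal m n) \<le> no_renewal_prob (m - s)"
      by (simp add: Pr_last_renewal)
  qed
  finally show ?thesis by simp
qed

lemma no_renewal_from_prob_eventually_le:
  "\<delta> > 0 \<Longrightarrow> eventually (\<lambda>m. no_renewal_from_prob m \<le> \<delta>) sequentially"
proof -
  assume \<delta>: "\<delta> > 0"
  obtain N where "\<forall>m\<ge>N. no_renewal_prob m \<le> \<delta> / real s"
    using no_renewal_prob_eventually_le[of "\<delta> / real s"] \<delta> s_pos
    by (auto simp: eventually_sequentially)
  then have "eventually (\<lambda>m. no_renewal_prob (m - s) \<le> \<delta> / real s) sequentially"
    unfolding eventually_sequentially by (intro exI[of _ "N + s"]) auto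
  then show ?thesis
    using eventually_ge_at_top[of s]
  proof eventually_elim
    case (elim m)
    then have "no_renewal_from_prob m \<le> real s * (\<delta> / real s)"
      by (meson no_renewal_from_prob_le of_nat_0_le_iff mult_left_mono order_trans)
    then show ?case using s_pos by simp
  qed
qed

definition no_success :: "nat \<Rightarrow> (nat \<Rightarrow> real) \<Rightarrow> bool" where
  "no_success m x \<longleftrightarrow> (\<forall>k\<le>m. \<not> (renewal_at k x \<and> B (shifted k x)))"

definition no_success_prob :: "nat \<Rightarrow> real" where
  "no_success_prob m = Pr (no_success m)"

lemma measurable_no_success [measurable]: "Measurable.pred \<Omega> (no_success m)"
  unfolding no_success_def by measurable

lemma no_success_prob_nonneg: "0 \<le> no_success_prob m"
  by (simp add: no_success_prob_def Pr_nonneg)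

lemma no_success_prob_le_1: "no_success_prob m \<le> 1"
  by (simp add: no_success_prob_def Pr_le_1)

lemma antimono_no_success_prob: "antimono no_success_prob"
  unfolding antimono_def no_success_prob_def by (auto intro!: Pr_mono simp: no_success_def)

definition first_renewal_from :: "nat \<Rightarrow> nat \<Rightarrow> (nat \<Rightarrow> real) \<Rightarrow> bool" where
  "first_renewal_from c k x \<longleftrightarrow> renewal_at k x \<and> (\<forall>j\<in>{c..<k}. \<not> renewal_at j x)"

lemma measurable_first_renewal_from [measurable]: "Measurable.pred \<Omega> (first_renewal_from c k)"
  unfolding first_renewal_from_def by measurable

lemma determined_first_renewal_from: "determined_by_prefix (first_renewal_from c k) k"
  unfolding determined_by_prefix_def first_renewal_from_def renewal_at_def by auto

lemma first_renewal_from_unique: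
  "first_renewal_from c k x \<Longrightarrow> first_renewal_from c k' x \<Longrightarrow> c \<le> k \<Longrightarrow> c \<le> k' \<Longrightarrow> k = k'"
  by (cases k k' rule: linorder_cases) (auto simp: first_renewal_from_def)

lemma no_success_cases:
  assumes fail: "\<forall>k\<in>{c..m}. \<not> (renewal_at k x \<and> B (shifted k x))"
    and some: "\<exists>k\<in>{c..m}. renewal_at k x"
  shows "\<exists>k\<in>{c..m}. first_renewal_from c k x \<and> no_success (m - k) (shifted k x)"
proof -
  obtain k where k: "k \<in> {c..m}" "renewal_at k x"
    and least: "\<forall>j<k. \<not> (j \<in> {c..m} \<and> renewal_at j x)"
    using some exists_least_iff[of "\<lambda>k. k \<in> {c..m} \<and> renewal_at k x"] by blast
  have "first_renewal_from c k x"
    unfolding first_renewal_from_def using k least by auto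
  moreover have "no_success (m - k) (shifted k x)"
    unfolding no_success_def
    using fail k renewal_at_shifted[of k "k + _" x] by (auto simp: add.commute)
  ultimately show ?thesis using k by blast
qed

definition failed_renewal_prob :: "nat \<Rightarrow> real" where
  "failed_renewal_prob k = Pr (\<lambda>x. \<not> B x \<and> first_renewal_from s k x)"

text \<open>Since \<open>B\<close> looks only at the first \<open>s\<close> coordinates, regenerating at the first renewal
  after \<open>s\<close> restarts the experiment independently of the failed attempt.\<close>
lemma no_success_prob_le:
  "no_success_prob m \<le> no_renewal_from_prob m + (\<Sum>k\<in>{s..m}. failed_renewal_prob k * no_success_prob (m - k))"
proof -
  let ?restart = "\<lambda>k x. (\<not> B x \<and> first_renewal_from s k x) \<and> no_success (m - k) (shifted k x)"
  have "no_success_prob m \<le> Pr (\<lambda>x. (\<forall>k\<in>{s..m}. \<not> renewal_at k x) \<or> (\<exists>k\<in>{s..m}. ?restart k x))"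
    unfolding no_success_prob_def
  proof (rule Pr_mono)
    fix x assume fail: "no_success m x"
    then have "\<not> B x" by (force simp: no_success_def)
    with fail no_success_cases[of s m x]
    show "(\<forall>k\<in>{s..m}. \<not> renewal_at k x) \<or> (\<exists>k\<in>{s..m}. ?restart k x)"
      by (auto simp: no_success_def)
  qed measurable
  also have "\<dots> \<le> no_renewal_from_prob m + Pr (\<lambda>x. \<exists>k\<in>{s..m}. ?restart k x)"
    unfolding no_renewal_from_prob_def by (rule Pr_disj_le) measurable
  also have "Pr (\<lambda>x. \<exists>k\<in>{s..m}. ?restart k x) \<le> (\<Sum>k\<in>{s..m}. Pr (?restart k))"
    by (rule Pr_Bex_le) auto
  also have "\<dots> = (\<Sum>k\<in>{s..m}. failed_renewal_prob k * no_success_prob (m - k))"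
  proof (rule sum.cong[OF refl])
    fix k assume "k \<in> {s..m}"
    then have "determined_by_prefix (\<lambda>x. \<not> B x \<and> first_renewal_from s k x) k"
      using determined_by_prefix_mono[OF determined_B, of k] determined_first_renewal_from[of s k]
      unfolding determined_by_prefix_def by auto
    then show "Pr (?restart k) = failed_renewal_prob k * no_success_prob (m - k)"
      unfolding failed_renewal_prob_def no_success_prob_def by (rule Pr_shifted_mult[rotated 2]) measurable
  qed
  finally show ?thesis by simp
qed

lemma sum_failed_renewal_prob_le: "(\<Sum>k\<in>{s..K}. failed_renewal_prob k) \<le> 1 - Pr B"
proof -
  have "(\<Sum>k\<in>{s..K}. failed_renewal_prob k) = Pr (\<lambda>x. \<exists>k\<in>{s..K}. \<not> B x \<and> first_renewal_from s k x)"
    unfolding failed_renewal_prob_def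
    by (rule Pr_Bex_disjoint[symmetric]) (auto intro: first_renewal_from_unique)
  also have "\<dots> \<le> Pr (\<lambda>x. \<not> B x)" by (rule Pr_mono) auto
  also have "\<dots> = 1 - Pr B" by (rule Pr_not) measurable
  finally show ?thesis .
qed

text \<open>With \<open>L = inf no_success_prob\<close>, the renewal inequality gives \<open>L \<le> (1 - Pr B) L\<close>.\<close>
lemma INF_no_success_prob: "(INF m. no_success_prob m) = 0"
proof -
  define \<rho> where "\<rho> = 1 - Pr B"
  have \<rho>: "\<rho> < 1" "0 \<le> \<rho>" using Pr_B_pos Pr_le_1[of B] unfolding \<rho>_def by auto
  have bdd: "bdd_below (range no_success_prob)"
    using no_success_prob_nonneg by (auto intro!: bdd_belowI)
  define L where "L = (INF m. no_success_prob m)"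
  have L_le: "L \<le> no_success_prob m" for m unfolding L_def using bdd by (intro cINF_lower) auto
  have L_nonneg: "0 \<le> L" unfolding L_def using no_success_prob_nonneg by (intro cINF_greatest) auto
  have approx: "L \<le> \<rho> * L + 2 * \<delta>" if \<delta>: "\<delta> > 0" for \<delta>
  proof -
    obtain N where N: "no_success_prob N < L + \<delta>"
      using cINF_less_iff[of UNIV no_success_prob "L + \<delta>"] bdd \<delta> unfolding L_def by auto
    have "eventually (\<lambda>m. no_success_prob m \<le> \<rho> * no_success_prob N + \<delta>) sequentially"
      using sum_failed_renewal_prob_le unfolding \<rho>_def
      by (intro renewal_ineq_eventually_le[OF _ _ antimono_no_success_prob no_success_prob_nonneg
            no_success_prob_le_1 no_renewal_from_prob_eventually_le no_success_prob_le \<delta>])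
        (auto simp: failed_renewal_prob_def Pr_nonneg)
    then obtain m where "no_success_prob m \<le> \<rho> * no_success_prob N + \<delta>"
      using eventually_happens'[OF sequentially_bot] by blast
    moreover have "\<rho> * no_success_prob N \<le> \<rho> * (L + \<delta>)" using N \<rho> by (intro mult_left_mono) auto
    moreover have "\<rho> * \<delta> \<le> \<delta>" using \<rho> \<delta> by (simp add: mult_left_le_one_le)
    ultimately show ?thesis using L_le[of m] by (simp add: distrib_left)
  qed
  have "L \<le> \<rho> * L"
  proof (rule field_le_epsilon)
    fix \<delta> :: real assume "\<delta> > 0"
    then show "L \<le> \<rho> * L + \<delta>" using approx[of "\<delta> / 2"] by simp
  qed
  then have "(1 - \<rho>) * L \<le> 0" by (simp add: algebra_simps)
  then show ?thesis
    using \<rho> L_nonneg unfolding L_def by (simp add: mult_le_0_iff)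
qed

definition no_success_after :: "nat \<Rightarrow> (nat \<Rightarrow> real) \<Rightarrow> bool" where
  "no_success_after m x \<longleftrightarrow> (\<forall>k\<in>{1..m}. \<not> (renewal_at k x \<and> B (shifted k x)))"

lemma measurable_no_success_after [measurable]: "Measurable.pred \<Omega> (no_success_after m)"
  unfolding no_success_after_def by measurable

lemma Pr_no_success_after_le:
  "Pr (no_success_after m) \<le> no_renewal_prob m + (\<Sum>k\<in>{1..m}. Pr (first_renewal_from 1 k) * no_success_prob (m - k))"
proof -
  let ?restart = "\<lambda>k x. first_renewal_from 1 k x \<and> no_success (m - k) (shifted k x)"
  have "Pr (no_success_after m) \<le> Pr (\<lambda>x. no_renewal m x \<or> (\<exists>k\<in>{1..m}. ?restart k x))"
  proof (rule Pr_mono)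
    fix x assume "no_success_after m x"
    with no_success_cases[of 1 m x] show "no_renewal m x \<or> (\<exists>k\<in>{1..m}. ?restart k x)"
      unfolding no_success_after_def no_renewal_def by auto
  qed measurable
  also have "\<dots> \<le> no_renewal_prob m + Pr (\<lambda>x. \<exists>k\<in>{1..m}. ?restart k x)"
    unfolding no_renewal_prob_def by (rule Pr_disj_le) measurable
  also have "Pr (\<lambda>x. \<exists>k\<in>{1..m}. ?restart k x) \<le> (\<Sum>k\<in>{1..m}. Pr (?restart k))"
    by (rule Pr_Bex_le) auto
  also have "\<dots> = (\<Sum>k\<in>{1..m}. Pr (first_renewal_from 1 k) * no_success_prob (m - k))"
    unfolding no_success_prob_def
    by (rule sum.cong[OF refl], rule Pr_shifted_mult[OF _ _ determined_first_renewal_from]) measurable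
  finally show ?thesis by simp
qed

lemma sum_Pr_first_renewal_le: "(\<Sum>k\<in>{1..K}. Pr (first_renewal_from 1 k)) \<le> 1"
proof -
  have "(\<Sum>k\<in>{1..K}. Pr (first_renewal_from 1 k)) = Pr (\<lambda>x. \<exists>k\<in>{1..K}. first_renewal_from 1 k x)"
    by (rule Pr_Bex_disjoint[symmetric]) (auto intro: first_renewal_from_unique)
  then show ?thesis using Pr_le_1 by simp
qed

lemma Pr_never_success: "Pr (\<lambda>x. \<forall>k\<ge>1. \<not> (renewal_at k x \<and> B (shifted k x))) = 0"
proof -
  let ?P = "Pr (\<lambda>x. \<forall>k\<ge>1. \<not> (renewal_at k x \<and> B (shifted k x)))"
  have small: "?P \<le> \<epsilon>" if \<epsilon>: "\<epsilon> > 0" for \<epsilon>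
  proof -
    obtain N where N: "no_success_prob N < \<epsilon> / 2"
      using INF_no_success_prob cINF_less_iff[of UNIV no_success_prob "\<epsilon> / 2"] \<epsilon>
        no_success_prob_nonneg by (force intro: bdd_belowI)
    have "eventually (\<lambda>m. Pr (no_success_after m) \<le> 1 * no_success_prob N + \<epsilon> / 2) sequentially"
      using \<epsilon> by (intro renewal_ineq_eventually_le[OF Pr_nonneg sum_Pr_first_renewal_le
          antimono_no_success_prob no_success_prob_nonneg no_success_prob_le_1
          no_renewal_prob_eventually_le Pr_no_success_after_le]) auto
    then obtain m where "Pr (no_success_after m) \<le> 1 * no_success_prob N + \<epsilon> / 2"
      using eventually_happens'[OF sequentially_bot] by blast
    moreover have "?P \<le> Pr (no_success_after m)"
      by (rule Pr_mono) (auto simp: no_success_after_def)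
    ultimately show ?thesis using N by linarith
  qed
  have "?P \<le> 0"
  proof (rule field_le_epsilon)
    fix \<epsilon> :: real assume "\<epsilon> > 0"
    from small[OF this] show "?P \<le> 0 + \<epsilon>" by (simp only: add_0)
  qed
  then show ?thesis using Pr_nonneg by (simp add: order_antisym)
qed

end

section \<open>Maximal coupling functions\<close>

lemma interval_measure_zero_subsingleton:
  fixes S :: "real set"
  assumes S: "is_interval S" "S \<subseteq> {l..r}" "measure lborel S = 0"
    and x: "x \<in> S" and y: "y \<in> S"
  shows "x = y"
proof (rule ccontr)
  assume "x \<noteq> y"
  have between: "t \<in> S" if "a \<in> S" "b \<in> S" "a \<le> t" "t \<le> b" for a b t
    using S(1) that unfolding is_interval_1 by blast
  obtain c d where cd: "c < d" "{c..d} \<subseteq> S"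
  proof
    show "min x y < max x y" using \<open>x \<noteq> y\<close> by (simp add: min_def max_def)
    show "{min x y..max x y} \<subseteq> S"
      using between[of "min x y" "max x y"] x y by (auto simp: min_def max_def)
  qed
  have borel: "S \<in> sets lborel" using real_interval_borel_measurable[OF S(1)] by simp
  have "l \<le> r" using S(2) x by auto
  have "emeasure lborel S \<le> emeasure lborel {l..r}" using S(2) borel by (intro emeasure_mono) auto
  also have "\<dots> = ennreal (r - l)" using \<open>l \<le> r\<close> by simp
  finally have "emeasure lborel S < \<infinity>" by (rule le_less_trans) simp
  then have "measure lborel {c..d} \<le> measure lborel S"
    using cd borel by (intro measure_mono_fmeasurable) (auto simp: fmeasurable_def)
  then show False using cd S(3) by simp
qed

lemma admissible_prepend:
  assumes z: "z \<in> admissible p" and pos: "p g z > 0"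
  shows "case_nat g z \<in> admissible p"
  unfolding admissible_def
proof (intro CollectI allI)
  fix n
  show "\<not> forbidden p (map (case_nat g z) [0..<n])"
  proof (cases n)
    case (Suc n')
    have "map (case_nat g z) [0..<Suc n'] = g # map z [0..<n']"
      by (simp add: upt_conv_Cons map_Suc_upt[symmetric] del: upt_Suc)
    moreover have "\<not> forbidden p (map z [0..<n'])" using z by (auto simp: admissible_def)
    ultimately show ?thesis using Suc pos by auto
  qed simp
qed

text \<open>The intervals \<open>B k g w\<close> of a maximal coupling function, taken as a parameter.\<close>
locale maximal_coupling =
  fixes p :: "'g::countable \<Rightarrow> (nat \<Rightarrow> 'g) \<Rightarrow> real" and f :: "real \<Rightarrow> (nat \<Rightarrow> 'g) \<Rightarrow> 'g"
    and B :: "nat \<Rightarrow> 'g \<Rightarrow> (nat \<Rightarrow> 'g) \<Rightarrow> real set"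
  assumes p_nonneg: "\<And>g w. 0 \<le> p g w"
    and is_interval_B: "\<And>k g w. w \<in> admissible p \<Longrightarrow> is_interval (B k g w)"
    and measure_B: "\<And>k g w. w \<in> admissible p \<Longrightarrow> measure lborel (B k g w) = bK p k g w"
    and UN_B: "\<And>k w. w \<in> admissible p \<Longrightarrow> (\<Union>g. B k g w) = {aPrev p k w ..< aW p k w}"
    and f_B: "\<And>k g w u. w \<in> admissible p \<Longrightarrow> u \<in> {0..<1} \<Longrightarrow> u \<in> B k g w \<Longrightarrow> f u w = g"
    and aS_1_pos: "aS p 1 > 0" and mono_a: "mono (aS p)" and a_lim: "aS p \<longlonglongrightarrow> 1"
begin

definition a1 :: real where
  "a1 = aS p 1"

lemma a_le_1: "aS p t \<le> 1"
  using mono_a a_lim by (intro incseq_le) (auto simp: mono_def incseq_def)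

lemma a1_pos: "0 < a1" and a1_le_1: "a1 \<le> 1"
  using aS_1_pos a_le_1 by (simp_all add: a1_def)

lemma aK_nonneg: "z \<in> admissible p \<Longrightarrow> 0 \<le> aK p k g z"
  unfolding aK_def by (rule cINF_greatest) (auto simp: p_nonneg)

lemma aK_le_p: "z \<in> admissible p \<Longrightarrow> aK p k g z \<le> p g z"
  unfolding aK_def by (rule cINF_lower) (auto intro!: bdd_belowI[of _ 0] simp: p_nonneg)

lemma aS_le_aW: "z \<in> admissible p \<Longrightarrow> aS p k \<le> aW p k z"
  unfolding aS_def aW_def
  by (rule cINF_lower) (auto intro!: bdd_belowI[of _ 0] infsum_nonneg simp: aK_nonneg)

lemma B_subset: "z \<in> admissible p \<Longrightarrow> B k g z \<subseteq> {aPrev p k z..aW p k z}"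
proof -
  assume z: "z \<in> admissible p"
  have "B k g z \<subseteq> (\<Union>g. B k g z)" by blast
  also have "\<dots> = {aPrev p k z..<aW p k z}" by (rule UN_B[OF z])
  finally show ?thesis by auto
qed

lemma ex_B_mem:
  assumes z: "z \<in> admissible p" and y: "0 \<le> y" "y < 1"
  shows "\<exists>k g. y \<in> B k g z"
proof -
  have ex: "\<exists>k. y < aW p k z"
    using order_tendstoD(1)[OF a_lim y(2)] aS_le_aW[OF z]
    by (auto simp: eventually_sequentially intro: less_le_trans)
  define k where "k = (LEAST k. y < aW p k z)"
  have "y < aW p k z" unfolding k_def by (rule LeastI_ex[OF ex])
  moreover have "aPrev p k z \<le> y"
  proof (cases k)
    case (Suc j)
    then have "\<not> y < aW p j z" unfolding k_def by (metis lessI not_less_Least)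
    then show ?thesis using Suc by (simp add: aPrev_def)
  qed (simp add: aPrev_def y)
  ultimately have "y \<in> (\<Union>g. B k g z)" using UN_B[OF z, of k] by simp
  then show ?thesis by blast
qed

lemma p_pos_if_measure_B:
  assumes z: "z \<in> admissible p" and "measure lborel (B k h z) \<noteq> 0"
  shows "p h z > 0"
proof -
  have "bK p k h z > 0" using assms measure_B[OF z] measure_nonneg[of lborel "B k h z"] by simp
  then have "aK p k h z > 0"
    using aK_nonneg[OF z, of "k - 1" h] unfolding bK_def by (auto split: if_splits)
  then show ?thesis using aK_le_p[OF z] by (meson less_le_trans)
qed

definition history_of :: "'g \<Rightarrow> nat \<Rightarrow> 'g" where
  "history_of g = (SOME z. z \<in> admissible p \<and> z 0 = g)"

lemma history_of: "g \<in> G0 p \<Longrightarrow> history_of g \<in> admissible p \<and> history_of g 0 = g"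
proof -
  assume "g \<in> G0 p"
  then have "\<exists>z. z \<in> admissible p \<and> z 0 = g" unfolding G0_def by blast
  then show ?thesis unfolding history_of_def by (rule someI_ex)
qed

lemma ftil_eq: "ftil p f u g = f (a1 * u) (history_of g)"
  by (simp add: ftil_def history_of_def a1_def)

text \<open>Points where \<open>f\<close> may select a letter through an interval of length zero. Away from
  this countable set every selected letter again ends an admissible history.\<close>
definition null_points :: "real set" where
  "null_points = (\<Union>g\<in>G0 p. \<Union>k. \<Union>h.
     if measure lborel (B k h (history_of g)) = 0 then B k h (history_of g) else {})"

lemma countable_null_points: "countable null_points"
  unfolding null_points_def
proof (intro countable_UN[OF countableI_type])
  fix g k h assume g: "g \<in> G0 p"
  let ?S = "B k h (history_of g)"
  have z: "history_of g \<in> admissible p" using history_of[OF g] by simp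
  have "finite ?S" if "measure lborel ?S = 0"
  proof (cases "?S = {}")
    case False
    then obtain x where "x \<in> ?S" by blast
    then have "?S \<subseteq> {x}"
      using interval_measure_zero_subsingleton[OF is_interval_B[OF z] B_subset[OF z] that] by blast
    then show ?thesis using finite_subset by blast
  qed simp
  then show "countable (if measure lborel ?S = 0 then ?S else {})"
    by (auto intro: countable_finite)
qed

lemma null_points_borel [measurable]: "null_points \<in> sets borel"
  using countable_imp_null_set_lborel[OF countable_null_points] by (simp add: null_sets_def)

definition good :: "real \<Rightarrow> bool" where
  "good u \<longleftrightarrow> 0 \<le> u \<and> u < 1 \<and> a1 * u \<notin> null_points"

lemma measurable_good [measurable]: "Measurable.pred borel good"
  unfolding good_def by measurable

lemma good_scaled: "good u \<Longrightarrow> 0 \<le> a1 * u \<and> a1 * u < 1"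
  using a1_pos a1_le_1 unfolding good_def
  by (auto intro: le_less_trans[OF mult_right_mono[of _ 1]])

lemma ftil_step:
  assumes g: "g \<in> G0 p" and u: "good u"
  shows "ftil p f u g \<in> G0 p \<and> (\<exists>k. a1 * u \<in> B k (ftil p f u g) (history_of g))"
proof -
  let ?z = "history_of g" and ?y = "a1 * u"
  have z: "?z \<in> admissible p" using history_of[OF g] by simp
  obtain k h where h: "?y \<in> B k h ?z" using ex_B_mem[OF z] good_scaled[OF u] by blast
  then have ft: "ftil p f u g = h" using f_B[OF z] good_scaled[OF u] by (simp add: ftil_eq)
  have "measure lborel (B k h ?z) \<noteq> 0"
    using h g u by (auto simp: good_def null_points_def)
  then have "case_nat h ?z \<in> admissible p"
    by (intro admissible_prepend z p_pos_if_measure_B)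
  then have "h \<in> G0 p" unfolding G0_def by (intro CollectI bexI[of _ "case_nat h ?z"]) auto
  with h show ?thesis unfolding ft by blast
qed

lemma ftil_eq_iff:
  assumes g: "g \<in> G0 p" and u: "good u"
  shows "ftil p f u g = h \<longleftrightarrow> a1 * u \<in> (\<Union>k. B k h (history_of g))"
  using ftil_step[OF g u] f_B[OF conjunct1[OF history_of[OF g]]] good_scaled[OF u]
  by (auto simp: ftil_eq)

lemma fiter_in_G0: "g \<in> G0 p \<Longrightarrow> \<forall>i<n. good (v i) \<Longrightarrow> fiter p f n v g \<in> G0 p"
  by (induction n arbitrary: v) (auto simp: ftil_step)

lemma fiter_cong: "\<forall>i<n. v i = v' i \<Longrightarrow> fiter p f n v g = fiter p f n v' g"
proof (induction n arbitrary: v v')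
  case (Suc n)
  then have "fiter p f n (\<lambda>i. v (Suc i)) g = fiter p f n (\<lambda>i. v' (Suc i)) g" by auto
  with Suc.prems show ?case by auto
qed simp

definition reaches :: "nat \<Rightarrow> 'g \<Rightarrow> 'g \<Rightarrow> (nat \<Rightarrow> real) \<Rightarrow> bool" where
  "reaches n g h x \<longleftrightarrow> (\<forall>i<n. good (x i)) \<and> fiter p f n x g = h"

lemma reaches_Suc:
  assumes g: "g \<in> G0 p"
  shows "reaches (Suc n) g h x \<longleftrightarrow> good (x 0) \<and>
    (\<exists>g'\<in>G0 p. reaches n g g' (\<lambda>i. x (Suc i)) \<and> a1 * x 0 \<in> (\<Union>k. B k h (history_of g')))"
    (is "?lhs \<longleftrightarrow> ?rhs")
proof
  assume lhs: ?lhs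
  then have good: "good (x 0)" "\<forall>i<n. good (x (Suc i))" by (auto simp: reaches_def)
  define g' where "g' = fiter p f n (\<lambda>i. x (Suc i)) g"
  have g': "g' \<in> G0 p" unfolding g'_def using fiter_in_G0[OF g good(2)] .
  have "ftil p f (x 0) g' = h" using lhs by (simp add: reaches_def g'_def)
  then show ?rhs
    using ftil_eq_iff[OF g' good(1)] good g' by (auto simp: reaches_def g'_def)
next
  assume ?rhs
  then obtain g' where g': "g' \<in> G0 p" "reaches n g g' (\<lambda>i. x (Suc i))"
    "a1 * x 0 \<in> (\<Union>k. B k h (history_of g'))" and good: "good (x 0)"
    by blast
  have "ftil p f (x 0) g' = h" using ftil_eq_iff[OF g'(1) good] g'(3) by simp
  moreover have "\<forall>i<Suc n. good (x i)"
    using good g'(2) by (auto simp: reaches_def less_Suc_eq_0_disj)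
  ultimately show ?lhs using g'(2) by (simp add: reaches_def)
qed

text \<open>Measurability of \<open>fiter\<close> is only claimed where it matters, on good points; there the
  letter reached is determined by countably many interval conditions.\<close>
lemma measurable_reaches [measurable]:
  "g \<in> G0 p \<Longrightarrow> Measurable.pred (PiM UNIV (\<lambda>_. borel)) (reaches n g h)"
proof (induction n arbitrary: h)
  case 0
  then show ?case by (simp add: reaches_def)
next
  case (Suc n)
  have [measurable]: "(\<Union>k. B k h (history_of g')) \<in> sets borel" if "g' \<in> G0 p" for g'
    using is_interval_B[OF conjunct1[OF history_of[OF that]]] real_interval_borel_measurable
    by (intro sets.countable_UN) auto
  have [measurable]: "(\<lambda>x i. x (Suc i)) \<in> PiM UNIV (\<lambda>_. borel) \<rightarrow>\<^sub>M PiM UNIV (\<lambda>_. borel :: real measure)"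
    by (rule measurable_PiM_single') (auto simp: space_PiM)
  note [measurable] = Suc.IH[OF Suc.prems]
  show ?case
    unfolding reaches_Suc[OF Suc.prems, abs_def]
    by (intro pred_intros_logic(3) pred_intros_countable_bounded(4)) measurable
qed

definition Egood :: "nat \<Rightarrow> (nat \<Rightarrow> real) \<Rightarrow> bool" where
  "Egood s x \<longleftrightarrow> (\<forall>i<s. good (x i)) \<and> (\<forall>g\<in>G0 p. \<forall>g'\<in>G0 p. fiter p f s x g = fiter p f s x g')"

lemma Egood_iff_reaches:
  "Egood s x \<longleftrightarrow> (\<forall>i<s. good (x i)) \<and> (\<forall>g\<in>G0 p. \<forall>g'\<in>G0 p. \<forall>h. reaches s g h x = reaches s g' h x)"
proof
  assume E: "Egood s x"
  have "reaches s g h x = reaches s g' h x" if "g \<in> G0 p" "g' \<in> G0 p" for g g' h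
  proof -
    have "fiter p f s x g = fiter p f s x g'" using E that unfolding Egood_def by blast
    then show ?thesis unfolding reaches_def by simp
  qed
  with E show "(\<forall>i<s. good (x i)) \<and> (\<forall>g\<in>G0 p. \<forall>g'\<in>G0 p. \<forall>h. reaches s g h x = reaches s g' h x)"
    unfolding Egood_def by blast
next
  assume R: "(\<forall>i<s. good (x i)) \<and> (\<forall>g\<in>G0 p. \<forall>g'\<in>G0 p. \<forall>h. reaches s g h x = reaches s g' h x)"
  have "fiter p f s x g = fiter p f s x g'" if "g \<in> G0 p" "g' \<in> G0 p" for g g'
    using R that unfolding reaches_def by blast
  with R show "Egood s x" unfolding Egood_def by blast
qed

lemma measurable_Egood [measurable]: "Measurable.pred (PiM UNIV (\<lambda>_. borel)) (Egood s)"
  unfolding Egood_iff_reaches[abs_def]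
  by (intro pred_intros_logic(3) pred_intros_countable_bounded(3) pred_intros_countable(1)
      pred_intros_logic(6) measurable_reaches) measurable

lemma determined_Egood: "determined_by_prefix (Egood s) s"
  unfolding determined_by_prefix_def
proof (intro allI impI)
  fix x y :: "nat \<Rightarrow> real" assume "\<forall>i<s. x i = y i"
  then show "Egood s x = Egood s y"
    using fiter_cong[of s x y] unfolding Egood_def by simp
qed

lemma Egood_imp_E: "Egood s v \<Longrightarrow> v \<in> E p f s"
  unfolding Egood_def E_def good_def by blast

lemma E_imp_Egood: "v \<in> E p f s \<Longrightarrow> \<forall>i<s. good (v i) \<Longrightarrow> Egood s v"
  unfolding Egood_def E_def by blast

end

lemma ex_maximal_coupling:
  assumes "max_coupling p f" and "\<And>g w. 0 \<le> p g w"
    and "aS p 1 > 0" and "mono (aS p)" and "aS p \<longlonglongrightarrow> 1"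
  shows "\<exists>B. maximal_coupling p f B"
proof -
  obtain B where B: "\<forall>k g w. w \<in> admissible p \<longrightarrow>
          is_interval (B k g w) \<and> measure lborel (B k g w) = bK p k g w"
      "\<forall>k w. w \<in> admissible p \<longrightarrow>
          disjoint_family (\<lambda>g. B k g w) \<and> (\<Union>g. B k g w) = {aPrev p k w ..< aW p k w}"
      "\<forall>w \<in> admissible p. \<forall>u \<in> {0..<1}. \<forall>k g. u \<in> B k g w \<longrightarrow> f u w = g"
    using assms(1) unfolding max_coupling_def by (elim exE conjE) (rule that)
  have "maximal_coupling p f B"
    by unfold_locales (use assms(2-) B in auto)
  then show ?thesis by blast
qed

section \<open>Finiteness of \<open>\<tau>\<^sub>0\<close>\<close>

locale coupling_from_past = iid_uniform M U + maximal_coupling p f B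
  for M :: "'a measure" and U and p :: "'g::countable \<Rightarrow> (nat \<Rightarrow> 'g) \<Rightarrow> real" and f B +
  fixes s :: nat
  assumes s_pos: "1 \<le> s"
    and not_summable_prod_a: "\<not> summable (\<lambda>n. \<Prod>m = 1..Suc n. aS p m)"
    and prob_E_pos: "measure M {\<omega> \<in> space M. (\<lambda>i. U (int s - 1 - int i) \<omega>) \<in> E p f s} > 0"
begin

lemma prob_not_good: "prob {\<omega> \<in> space M. \<not> good (U j \<omega>)} = 0"
proof -
  have sub: "{0..<1} \<inter> {u. \<not> good u} \<subseteq> (\<lambda>y. y / a1) ` null_points"
  proof
    fix u assume "u \<in> {0..<1} \<inter> {u. \<not> good u}"
    then have "a1 * u \<in> null_points" by (auto simp: good_def)
    moreover have "u = (a1 * u) / a1" using a1_pos by simp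
    ultimately show "u \<in> (\<lambda>y. y / a1) ` null_points" by blast
  qed
  have null: "(\<lambda>y. y / a1) ` null_points \<in> null_sets lborel"
    by (rule countable_imp_null_set_lborel) (simp add: countable_null_points)
  have "emeasure lborel ({0..<1} \<inter> {u. \<not> good u}) = 0"
    by (rule null_setsD1, rule null_sets_subset[OF null _ sub]) simp
  then have "measure uniform01 {u. \<not> good u} = 0"
    unfolding measure_def using emeasure_uniform01[of "{u. \<not> good u}"] by simp
  moreover have "prob {\<omega> \<in> space M. \<not> good (U j \<omega>)} = measure (distr M borel (U j)) {u. \<not> good u}"
    by (subst measure_distr) (auto intro!: arg_cong[where f=prob])
  ultimately show ?thesis by (simp add: distr_U)
qed

lemma prob_Egood_pos: "prob {\<omega> \<in> space M. Egood s (\<lambda>i. U (int s - 1 - int i) \<omega>)} > 0"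
proof -
  let ?Y = "\<lambda>\<omega> i. U (int s - 1 - int i) \<omega>"
  have "?Y \<in> M \<rightarrow>\<^sub>M \<Omega>" by (rule measurable_PiM_single') (auto simp: space_PiM)
  then have Egood_event: "{\<omega> \<in> space M. Egood s (?Y \<omega>)} \<in> events"
    by (intro predE) (rule measurable_compose[OF _ measurable_Egood, unfolded pred_def[symmetric]])
  define N where "N = (\<Union>i<s. {\<omega> \<in> space M. \<not> good (U (int s - 1 - int i) \<omega>)})"
  have N: "N \<in> events" unfolding N_def by measurable
  have "prob N \<le> (\<Sum>i<s. prob {\<omega> \<in> space M. \<not> good (U (int s - 1 - int i) \<omega>)})"
    unfolding N_def by (rule finite_measure_subadditive_finite) auto
  then have "prob N = 0" using measure_nonneg[of M N] by (simp add: prob_not_good)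
  have "{\<omega> \<in> space M. ?Y \<omega> \<in> E p f s} \<subseteq> {\<omega> \<in> space M. Egood s (?Y \<omega>)} \<union> N"
    using E_imp_Egood by (fastforce simp: N_def)
  then have "prob {\<omega> \<in> space M. ?Y \<omega> \<in> E p f s} \<le> prob ({\<omega> \<in> space M. Egood s (?Y \<omega>)} \<union> N)"
    using N Egood_event by (intro finite_measure_mono) auto
  also have "\<dots> \<le> prob {\<omega> \<in> space M. Egood s (?Y \<omega>)} + prob N"
    using Egood_event N by (rule measure_Un_le)
  finally show ?thesis using prob_E_pos \<open>prob N = 0\<close> by simp
qed

definition Escaled :: "(nat \<Rightarrow> real) \<Rightarrow> bool" where
  "Escaled x \<longleftrightarrow> Egood s (\<lambda>i. x i / a1)"

lemma measurable_Escaled [measurable]: "Measurable.pred \<Omega> Escaled"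
proof -
  have "(\<lambda>x i. x i / a1) \<in> \<Omega> \<rightarrow>\<^sub>M \<Omega>"
    by (rule measurable_PiM_single') (auto simp: space_PiM intro!: measurable_component_singleton)
  then show ?thesis
    unfolding Escaled_def using measurable_compose[OF _ measurable_Egood] by (simp add: pred_def comp_def)
qed

lemma determined_Escaled: "determined_by_prefix Escaled s"
  using determined_Egood unfolding determined_by_prefix_def Escaled_def by simp

lemma Escaled_extend_iff:
  "Escaled (\<lambda>i. if i < s then y i else 0) \<longleftrightarrow>
     (\<forall>i<s. y i < a1) \<and> Egood s (\<lambda>i. if i < s then (\<lambda>i\<in>{..<s}. y i / a1) i else 0)"
proof -
  have "Egood s (\<lambda>i. if i < s then (\<lambda>i\<in>{..<s}. y i / a1) i else 0)
      = Escaled (\<lambda>i. if i < s then y i else 0)"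
    unfolding Escaled_def by (rule determined_by_prefixD[OF determined_Egood]) simp
  moreover have "y i < a1" if "Escaled (\<lambda>i. if i < s then y i else 0)" "i < s" for i
    using that a1_pos by (auto simp: Escaled_def Egood_def good_def divide_less_eq)
  ultimately show ?thesis by auto
qed

lemma Pr_Escaled_eq: "Pr Escaled = a1 ^ s * prob {\<omega> \<in> space M. Egood s (\<lambda>i. U (int s - 1 - int i) \<omega>)}"
proof -
  let ?\<nu> = "PiM {..<s} (\<lambda>_. uniform01)" and ?\<nu>b = "PiM {..<s} (\<lambda>_. borel :: real measure)"
  let ?ext = "\<lambda>y i. if i < s then y i else (0::real)"
  define X where "X = {y \<in> space ?\<nu>b. Egood s (?ext y)}"
  have X: "X \<in> sets ?\<nu>b"
    unfolding X_def using measurable_compose[OF measurable_extend_zero measurable_Egood] by (simp add: pred_def)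
  have s: "0 < s" using s_pos by simp
  have "prob {\<omega> \<in> space M. Egood s (\<lambda>i. U (int s - 1 - int i) \<omega>)} = measure ?\<nu> X"
    unfolding X_def by (rule prob_reindexed_prefix[OF _ s measurable_Egood determined_Egood]) (auto simp: inj_def)
  moreover have "Pr Escaled = measure ?\<nu> {y \<in> space ?\<nu>b. Escaled (?ext y)}"
    unfolding Pr_def past_def
    by (rule prob_reindexed_prefix[OF _ s measurable_Escaled determined_Escaled]) (auto simp: inj_def)
  moreover have "{y \<in> space ?\<nu>b. Escaled (?ext y)}
      = {y \<in> space ?\<nu>. (\<forall>i<s. y i < a1) \<and> (\<lambda>i\<in>{..<s}. y i / a1) \<in> X}"
  proof (intro set_eqI)
    fix y
    show "y \<in> {y \<in> space ?\<nu>b. Escaled (?ext y)} \<longleftrightarrow>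
        y \<in> {y \<in> space ?\<nu>. (\<forall>i<s. y i < a1) \<and> (\<lambda>i\<in>{..<s}. y i / a1) \<in> X}"
      using Escaled_extend_iff[of y] by (simp add: X_def space_PiM)
  qed
  moreover have "measure ?\<nu> {y \<in> space ?\<nu>. (\<forall>i<s. y i < a1) \<and> (\<lambda>i\<in>{..<s}. y i / a1) \<in> X}
      = a1 ^ s * measure ?\<nu> X"
    using emeasure_PiM_uniform01_scaled[OF a1_pos a1_le_1 X] a1_pos
    by (simp add: measure_def enn2real_mult)
  ultimately show ?thesis by simp
qed

lemma renewal_success: "renewal_success M U (aS p) s Escaled"
proof unfold_locales
  show "Pr Escaled > 0" using Pr_Escaled_eq prob_Egood_pos a1_pos by simp
qed (use mono_a aS_1_pos a_le_1 not_summable_prod_a determined_Escaled s_pos in auto)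

lemma AE_success:
  "AE \<omega> in M. \<exists>k\<ge>1. renewal_success.renewal_at (aS p) k (past 0 \<omega>) \<and> Escaled (past k \<omega>)"
proof -
  interpret renewal_success M U "aS p" s Escaled by (rule renewal_success)
  let ?fail = "\<lambda>x. \<forall>k\<ge>1. \<not> (renewal_at k x \<and> Escaled (shifted k x))"
  have "{\<omega> \<in> space M. ?fail (past 0 \<omega>)} \<in> null_sets M"
    using Pr_never_success by (auto simp: Pr_def emeasure_eq_measure intro!: null_setsI)
  then show ?thesis by (rule AE_I') (auto simp: past_eq_shifted[symmetric])
qed

lemma tau0_finite_if_success:
  assumes k: "k \<ge> 1" and renewal: "renewal_success.renewal_at (aS p) k (past 0 \<omega>)"
    and E: "Escaled (past k \<omega>)"
  shows "\<bar>tau0 p f U \<omega>\<bar> \<noteq> \<infinity>"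
proof -
  define S where "S = {m. m < 0 \<and> (\<exists>l. m \<le> l \<and> l \<le> 0 \<and>
        (\<lambda>i. U (l - int i) \<omega> / aS p 1) \<in> E p f (nat (l - m + 1)) \<and>
        (l < 0 \<longrightarrow> (\<forall>j. l + 1 \<le> j \<and> j \<le> 0 \<longrightarrow> int (Kfun p (U j \<omega>)) \<le> j - l)))}"
  define l :: int where "l = - int k"
  define m :: int where "m = l - int s + 1"
  have "m \<in> S"
    unfolding S_def mem_Collect_eq
  proof (intro conjI exI[of _ l])
    show "m < 0" "m \<le> l" "l \<le> 0" using k s_pos by (auto simp: m_def l_def)
    have "l - int i = - int (k + i)" for i by (simp add: l_def)
    then have "(\<lambda>i. U (l - int i) \<omega> / aS p 1) = (\<lambda>i. past k \<omega> i / a1)"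
      by (simp add: past_def a1_def)
    then show "(\<lambda>i. U (l - int i) \<omega> / aS p 1) \<in> E p f (nat (l - m + 1))"
      using Egood_imp_E E by (simp add: m_def Escaled_def a1_def)
    show "l < 0 \<longrightarrow> (\<forall>j. l + 1 \<le> j \<and> j \<le> 0 \<longrightarrow> int (Kfun p (U j \<omega>)) \<le> j - l)"
    proof (intro impI allI)
      fix j assume j: "l + 1 \<le> j \<and> j \<le> 0"
      define i where "i = nat (- j)"
      have i: "i < k" "j = - int i" using j k by (auto simp: i_def l_def)
      then have "U j \<omega> < aS p (k - i)"
        using renewal unfolding renewal_success.renewal_at_def[OF renewal_success] by (simp add: past_def)
      then have "Kfun p (U j \<omega>) \<le> k - i" unfolding Kfun_def by (rule Least_le)
      then show "int (Kfun p (U j \<omega>)) \<le> j - l" using i by (simp add: l_def)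
    qed
  qed
  have tau0: "tau0 p f U \<omega> = Sup (ereal ` real_of_int ` S)" unfolding tau0_def S_def by (rule refl)
  have "ereal (real_of_int m) \<le> tau0 p f U \<omega>"
    unfolding tau0 using \<open>m \<in> S\<close> by (intro Sup_upper imageI)
  moreover have "tau0 p f U \<omega> \<le> ereal (-1)"
    unfolding tau0 by (rule Sup_least) (auto simp: S_def)
  ultimately show ?thesis by (cases "tau0 p f U \<omega>") auto
qed

lemma AE_tau0_finite: "AE \<omega> in M. \<bar>tau0 p f U \<omega>\<bar> \<noteq> \<infinity>"
  using AE_success by eventually_elim (metis tau0_finite_if_success)

end

theorem theorem2:
  fixes p :: "'g::countable \<Rightarrow> (nat \<Rightarrow> 'g) \<Rightarrow> real"
    and f :: "real \<Rightarrow> (nat \<Rightarrow> 'g) \<Rightarrow> 'g"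
    and M :: "'a measure"
    and U :: "int \<Rightarrow> 'a \<Rightarrow> real"
  assumes p_nonneg: "\<forall>g w. 0 \<le> p g w"
    and p_sum: "\<forall>w. ((\<lambda>g. p g w) has_sum 1) UNIV"
    and p_meas: "\<forall>g. p g \<in> borel_measurable (Pi\<^sub>M UNIV (\<lambda>_. count_space UNIV))"
    and f_max: "max_coupling p f"
    and a1_pos: "aS p 1 > 0"
    and a_mono: "mono (aS p)"
    and a_lim: "aS p \<longlonglongrightarrow> 1"
    and M_prob: "prob_space M"
    and U_indep: "prob_space.indep_vars M (\<lambda>_. borel) U UNIV"
    and U_unif: "\<forall>i. distr M borel (U i) = uniform_measure lborel {0..<1}"
    and cond_i: "\<not> summable (\<lambda>n. \<Prod>m = 1..Suc n. aS p m)"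
    and cond_ii: "\<exists>s::nat. s \<ge> 1 \<and>
        measure M {\<omega> \<in> space M. (\<lambda>i. U (int s - 1 - int i) \<omega>) \<in> E p f s} > 0"
  shows "AE \<omega> in M. \<bar>tau0 p f U \<omega>\<bar> \<noteq> \<infinity>"
proof -
  obtain s where s: "s \<ge> 1" "measure M {\<omega> \<in> space M. (\<lambda>i. U (int s - 1 - int i) \<omega>) \<in> E p f s} > 0"
    using cond_ii by blast
  obtain B where "maximal_coupling p f B"
    using ex_maximal_coupling f_max p_nonneg a1_pos a_mono a_lim by blast
  then interpret coupling_from_past M U p f B s
    using M_prob U_indep U_unif s cond_i
    by (intro coupling_from_past.intro iid_uniform.intro iid_uniform_axioms.intro
        coupling_from_past_axioms.intro) auto
  show ?thesis by (rule AE_tau0_finite)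
qed

end
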